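(* Let $n\ge2$, let $\frac12<a\le\frac34$ and $b=2a-1$, and let $0<c_0\le1$. If $F$ is the $(a,b)$-set of divergence (a "set of type I"), then $$\dim_H\big(F\cap[0,c_0]^n\big)\ge\alpha:=\frac12+(n-1)a+b.$$
   Context: For $k\ge k_0$ let $R_k=2^k$, $D_k=R_k^{(n-(n-1)a+nb)/(n+1)}$, $Q_k=R_k^{\frac{n-1}{n+1}(2a-b-1)}$ (here $Q_k=1$). A point $(p_1/q,\dots,p_n/q)$, $p_j,q\in\mathbb{Z}$, is an admissible fraction if $\gcd(p_1,q)=1$ and: $p_2,\dots,p_n$ arbitrary when $q$ is odd; all even when $q\equiv0\pmod4$; all odd when $q\equiv2\pmod4$. Fix $0<c\ll1$. Let $\mathcal{A}_k$ be the collection of axis-parallel boxes ("slabs") of dimensions $cR_k^{-1/2}\times cR_k^{-1}\times\cdots\times cR_k^{-1}$ (long side in the $x_1$ direction) centered at $\big(2p_1R_k/(qD_k^2),p_2/(D_kq),\dots,p_n/(D_kq)\big)$ with $(p_1/q,\dots,p_n/q)$ admissible and $1\le q\le Q_k$; $F_k=\bigcup_{s\in\mathcal{A}_k}s$, and $F=\limsup_{k\to\infty}F_k=\bigcap_N\bigcup_{k\ge N}F_k$. $\dim_H$ denotes Hausdorff dimension. *)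

theory Defs
  imports "HOL-Analysis.Analysis"
begin

definition hausdorff_pre :: "real \<Rightarrow> real \<Rightarrow> ('a::metric_space) set \<Rightarrow> ennreal" where
  "hausdorff_pre s \<delta> E =
     (INF U \<in> {U :: nat \<Rightarrow> 'a set. E \<subseteq> (\<Union>i. U i) \<and>
                  (\<forall>i. bounded (U i) \<and> diameter (U i) \<le> \<delta>)}.
        (\<Sum>i. ennreal (diameter (U i) powr s)))"

definition hausdorff_measure :: "real \<Rightarrow> ('a::metric_space) set \<Rightarrow> ennreal" where
  "hausdorff_measure s E = (SUP \<delta> \<in> {0<..}. hausdorff_pre s \<delta> E)"

definition hausdorff_dim :: "('a::metric_space) set \<Rightarrow> real" where
  "hausdorff_dim E = Inf {s. 0 \<le> s \<and> hausdorff_measure s E = 0}"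

text \<open>The coordinate index i1 plays the role of the first coordinate x_1.\<close>

definition R_k :: "nat \<Rightarrow> real" where
  "R_k k = 2 ^ k"

definition D_k :: "nat \<Rightarrow> real \<Rightarrow> real \<Rightarrow> nat \<Rightarrow> real" where
  "D_k n a b k = R_k k powr ((real n - (real n - 1) * a + real n * b) / (real n + 1))"

definition Q_k :: "nat \<Rightarrow> real \<Rightarrow> real \<Rightarrow> nat \<Rightarrow> real" where
  "Q_k n a b k = R_k k powr ((real n - 1) / (real n + 1) * (2 * a - b - 1))"

definition admissible :: "'n \<Rightarrow> ('n \<Rightarrow> int) \<Rightarrow> int \<Rightarrow> bool" where
  "admissible i1 p q \<longleftrightarrow>
     gcd (p i1) q = 1 \<and>
     (q mod 4 = 0 \<longrightarrow> (\<forall>j. j \<noteq> i1 \<longrightarrow> even (p j))) \<and>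
     (q mod 4 = 2 \<longrightarrow> (\<forall>j. j \<noteq> i1 \<longrightarrow> odd (p j)))"

definition slab_center :: "'n \<Rightarrow> real \<Rightarrow> real \<Rightarrow> nat \<Rightarrow> ('n \<Rightarrow> int) \<Rightarrow> int \<Rightarrow> real ^ 'n" where
  "slab_center i1 a b k p q =
     (\<chi> i. if i = i1
           then 2 * real_of_int (p i1) * R_k k / (real_of_int q * (D_k CARD('n) a b k)\<^sup>2)
           else real_of_int (p i) / (D_k CARD('n) a b k * real_of_int q))"

definition slab :: "'n \<Rightarrow> real \<Rightarrow> real \<Rightarrow> real \<Rightarrow> nat \<Rightarrow> ('n \<Rightarrow> int) \<Rightarrow> int \<Rightarrow> (real ^ 'n) set" where
  "slab i1 a b c k p q =
     {x. \<forall>i. \<bar>x $ i - slab_center i1 a b k p q $ i\<bar>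
              \<le> (if i = i1 then c * R_k k powr (-1/2) else c * R_k k powr (-1)) / 2}"

definition F_k :: "'n \<Rightarrow> real \<Rightarrow> real \<Rightarrow> real \<Rightarrow> nat \<Rightarrow> (real ^ 'n) set" where
  "F_k i1 a b c k =
     (\<Union>{slab i1 a b c k p q | p q. admissible i1 p q \<and> 1 \<le> q \<and>
                                     real_of_int q \<le> Q_k CARD('n) a b k})"

definition divergence_set :: "'n \<Rightarrow> real \<Rightarrow> real \<Rightarrow> real \<Rightarrow> (real ^ 'n) set" where
  "divergence_set i1 a b c = (\<Inter>N. \<Union>k\<in>{N..}. F_k i1 a b c k)"

end

theory Submission
  imports Defs
begin

text \<open>For \<open>b = 2 a - 1\<close> we have \<open>Q_k = 1\<close> and \<open>D_k = R_k ^ a\<close>, so \<open>F_k\<close> is a full lattice of slabs: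
  in the first direction they have length \<open>c R_k ^ (-1/2)\<close> and spacing \<open>2 R_k ^ (1 - 2 a)\<close>, in the
  other directions side \<open>c R_k ^ (-1)\<close> and spacing \<open>R_k ^ (-a)\<close>. Along a rapidly increasing sequence of
  scales we keep, inside each cell of one level, the cells of the next level centred at lattice points
  of its left half; the intersection of all levels is a compact subset of \<open>F \<inter> [0, c0] ^ n\<close>.
  It is a product of one-dimensional Cantor sets, so the proportion of level-\<open>J\<close> cells inside a set of
  diameter \<open>d\<close> is at most a product of one-dimensional proportions. Comparing \<open>d\<close> with the
  thresholds \<open>R ^ (-1)\<close>, \<open>R ^ (-a)\<close>, \<open>R ^ (-1/2)\<close>, \<open>R ^ (1 - 2 a)\<close> of the current scale \<open>R\<close> bounds
  this product by \<open>C d ^ s\<close> for every \<open>s < \<alpha>\<close>, provided each scale is large enough compared with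
  the previous one. The mass distribution principle then gives \<open>H\<^sup>s > 0\<close> for all \<open>s < \<alpha>\<close>.\<close>

section \<open>Hausdorff measure and dimension\<close>

lemma hausdorff_pre_antimono:
  assumes "\<delta> \<le> \<delta>'"
  shows "hausdorff_pre s \<delta>' E \<le> hausdorff_pre s \<delta> E"
  unfolding hausdorff_pre_def using assms by (intro INF_superset_mono) (auto intro: order_trans)

lemma hausdorff_pre_le_hausdorff_measure:
  "0 < \<delta> \<Longrightarrow> hausdorff_pre s \<delta> E \<le> hausdorff_measure s E"
  unfolding hausdorff_measure_def by (rule SUP_upper) simp

lemma hausdorff_pre_antimono_exponent:
  assumes "s \<le> t" "\<delta> \<le> 1"
  shows "hausdorff_pre t \<delta> E \<le> hausdorff_pre s \<delta> E"
  unfolding hausdorff_pre_def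
proof (rule INF_mono)
  fix U :: "nat \<Rightarrow> 'a set"
  assume U: "U \<in> {U. E \<subseteq> (\<Union>i. U i) \<and> (\<forall>i. bounded (U i) \<and> diameter (U i) \<le> \<delta>)}"
  have "diameter (U i) powr t \<le> diameter (U i) powr s" for i
  proof (rule powr_mono')
    show "diameter (U i) \<le> 1" using U assms(2) by (auto intro: order_trans)
  qed (use U assms diameter_ge_0[of "U i"] in auto)
  then have "(\<Sum>i. ennreal (diameter (U i) powr t)) \<le> (\<Sum>i. ennreal (diameter (U i) powr s))"
    by (intro suminf_le ennreal_leI) auto
  with U show "\<exists>U'\<in>{U. E \<subseteq> (\<Union>i. U i) \<and> (\<forall>i. bounded (U i) \<and> diameter (U i) \<le> \<delta>)}.
      (\<Sum>i. ennreal (diameter (U' i) powr t)) \<le> (\<Sum>i. ennreal (diameter (U i) powr s))"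
    by blast
qed

lemma hausdorff_measure_antimono_exponent:
  assumes "s \<le> t"
  shows "hausdorff_measure t E \<le> hausdorff_measure s E"
  unfolding hausdorff_measure_def
proof (rule SUP_least)
  fix \<delta> :: real assume "\<delta> \<in> {0<..}"
  have "hausdorff_pre t \<delta> E \<le> hausdorff_pre t (min \<delta> 1) E"
    by (rule hausdorff_pre_antimono) simp
  also have "\<dots> \<le> hausdorff_pre s (min \<delta> 1) E"
    using assms by (rule hausdorff_pre_antimono_exponent) simp
  also have "\<dots> \<le> (SUP \<delta>\<in>{0<..}. hausdorff_pre s \<delta> E)"
    using \<open>\<delta> \<in> {0<..}\<close> by (intro SUP_upper) simp
  finally show "hausdorff_pre t \<delta> E \<le> (SUP \<delta>\<in>{0<..}. hausdorff_pre s \<delta> E)" .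
qed

lemma hausdorff_dim_geI:
  assumes "0 \<le> t" "hausdorff_measure t E = 0"
    and "\<And>s. 0 \<le> s \<Longrightarrow> s < \<alpha> \<Longrightarrow> hausdorff_measure s E \<noteq> 0"
  shows "\<alpha> \<le> hausdorff_dim E"
  unfolding hausdorff_dim_def
proof (rule cInf_greatest)
  show "{s. 0 \<le> s \<and> hausdorff_measure s E = 0} \<noteq> {}" using assms(1,2) by blast
  show "\<alpha> \<le> s" if "s \<in> {s. 0 \<le> s \<and> hausdorff_measure s E = 0}" for s
    using assms(3)[of s] that by force
qed

lemma hausdorff_pre_le_finite_cover:
  fixes U :: "'i \<Rightarrow> 'a::metric_space set"
  assumes "finite I" "E \<subseteq> (\<Union>i\<in>I. U i)" "\<And>i. i \<in> I \<Longrightarrow> bounded (U i)"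
    and "\<And>i. i \<in> I \<Longrightarrow> diameter (U i) \<le> \<delta>" "0 \<le> \<delta>"
  shows "hausdorff_pre s \<delta> E \<le> ennreal (\<Sum>i\<in>I. diameter (U i) powr s)"
proof -
  obtain f where f: "bij_betw f {..<card I} I"
    using ex_bij_betw_nat_finite[OF assms(1)] by (auto simp: atLeast0LessThan)
  define W where "W k = (if k < card I then U (f k) else {})" for k
  have "E \<subseteq> (\<Union>k. W k)"
    using assms(2) f by (force simp: W_def bij_betw_def)
  moreover have "bounded (W k) \<and> diameter (W k) \<le> \<delta>" for k
    using f assms(3-5) by (auto simp: W_def bij_betw_def)
  ultimately have "hausdorff_pre s \<delta> E \<le> (\<Sum>k. ennreal (diameter (W k) powr s))"
    unfolding hausdorff_pre_def by (intro INF_lower) auto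
  also have "\<dots> = (\<Sum>k<card I. ennreal (diameter (U (f k)) powr s))"
    by (subst suminf_finite[of "{..<card I}"]) (auto simp: W_def)
  also have "\<dots> = ennreal (\<Sum>i\<in>I. diameter (U i) powr s)"
    using sum.reindex_bij_betw[OF f, of "\<lambda>i. ennreal (diameter (U i) powr s)"] by simp
  finally show ?thesis .
qed

lemma unit_cube_grid_cover:
  fixes x :: "real ^ 'n" and M :: nat
  assumes "1 \<le> M" "\<And>i. 0 \<le> x $ i \<and> x $ i \<le> 1"
  obtains v where "v \<in> (\<Pi>\<^sub>E i\<in>UNIV. {..<M})"
    "x \<in> cbox (\<chi> i. real (v i) / M) (\<chi> i. (real (v i) + 1) / M)"
proof
  define v where "v i = min (nat \<lfloor>real M * x $ i\<rfloor>) (M - 1)" for i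
  show "v \<in> (\<Pi>\<^sub>E i\<in>UNIV. {..<M})" using assms(1) by (auto simp: v_def)
  have "real (v i) \<le> real M * x $ i \<and> real M * x $ i \<le> real (v i) + 1" for i
  proof -
    have "0 \<le> \<lfloor>real M * x $ i\<rfloor>" using assms(2)[of i] by simp
    moreover have "real M * x $ i \<le> real M" using assms(2)[of i] by (simp add: mult_left_le)
    ultimately show ?thesis
      using assms(1) by (auto simp: v_def min_def of_nat_diff) linarith+
  qed
  then show "x \<in> cbox (\<chi> i. real (v i) / M) (\<chi> i. (real (v i) + 1) / M)"
    using assms(1) by (simp add: mem_box_cart field_simps)
qed

lemma diameter_grid_cell:
  fixes v :: "'n::finite \<Rightarrow> nat" and M :: nat
  assumes "0 < M"
  shows "diameter (cbox (\<chi> i. real (v i) / M) (\<chi> i. (real (v i) + 1) / M) :: (real ^ 'n) set)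
           \<le> CARD('n) / M"
proof -
  let ?a = "\<chi> i. real (v i) / M :: real ^ 'n" and ?b = "\<chi> i. (real (v i) + 1) / M :: real ^ 'n"
  have "diameter (cbox ?a ?b) = dist ?a ?b"
    using assms by (intro diameter_cbox) (simp add: eucl_le[symmetric] less_eq_vec_def divide_right_mono)
  also have "\<dots> \<le> (\<Sum>i\<in>UNIV. \<bar>(?a - ?b) $ i\<bar>)"
    unfolding dist_norm by (rule norm_le_l1_cart)
  also have "\<dots> = CARD('n) / M" by (simp add: diff_divide_distrib[symmetric])
  finally show ?thesis .
qed

lemma hausdorff_pre_unit_cube_le:
  fixes E :: "(real ^ 'n) set" and M :: nat
  assumes "E \<subseteq> {x. \<forall>i. 0 \<le> x $ i \<and> x $ i \<le> 1}" "1 \<le> M" "CARD('n) / M \<le> \<delta>"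
  shows "hausdorff_pre (real CARD('n) + 1) \<delta> E \<le> ennreal (real CARD('n) ^ (CARD('n) + 1) / M)"
proof -
  let ?n = "real CARD('n)"
  define cell where "cell v = cbox (\<chi> i. real (v i) / M) (\<chi> i. (real (v i) + 1) / M :: real ^ 'n)"
    for v :: "'n \<Rightarrow> nat"
  define VV where "VV = (\<Pi>\<^sub>E i\<in>(UNIV::'n set). {..<M})"
  have "E \<subseteq> (\<Union>v\<in>VV. cell v)"
  proof
    fix x assume "x \<in> E"
    with assms(1) have "\<And>i. 0 \<le> x $ i \<and> x $ i \<le> 1" by auto
    with assms(2) obtain v where "v \<in> VV" "x \<in> cell v"
      unfolding VV_def cell_def by (rule unit_cube_grid_cover)
    then show "x \<in> (\<Union>v\<in>VV. cell v)" by blast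
  qed
  moreover have diam: "diameter (cell v) \<le> ?n / M" for v
    unfolding cell_def using assms(2) by (intro diameter_grid_cell) simp
  moreover have "finite VV" by (simp add: VV_def finite_PiE)
  moreover have bounded: "bounded (cell v)" for v by (simp add: cell_def)
  moreover have "0 \<le> \<delta>" using assms(3) by (smt (verit) divide_nonneg_nonneg of_nat_0_le_iff)
  ultimately have "hausdorff_pre (?n + 1) \<delta> E \<le> ennreal (\<Sum>v\<in>VV. diameter (cell v) powr (?n + 1))"
    using assms(3) by (intro hausdorff_pre_le_finite_cover) (auto intro: order_trans)
  also have "\<dots> \<le> ennreal (\<Sum>v\<in>VV. (?n / M) powr (?n + 1))"
    using diam bounded by (intro ennreal_leI sum_mono powr_mono2) (auto intro: diameter_ge_0)
  also have "(\<Sum>v\<in>VV. (?n / M) powr (?n + 1)) = real M ^ CARD('n) * (?n / M) ^ (CARD('n) + 1)"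
  proof -
    have "(?n / M) powr (?n + 1) = (?n / M) ^ (CARD('n) + 1)"
      using assms(2) by (subst powr_realpow[symmetric]) (simp_all add: add.commute)
    then show ?thesis by (simp add: VV_def card_PiE)
  qed
  also have "\<dots> = ?n ^ (CARD('n) + 1) / M"
    using assms(2) by (simp add: power_divide power_add field_simps)
  finally show ?thesis .
qed

lemma hausdorff_measure_unit_cube:
  fixes E :: "(real ^ 'n) set"
  assumes "E \<subseteq> {x. \<forall>i. 0 \<le> x $ i \<and> x $ i \<le> 1}"
  shows "hausdorff_measure (real CARD('n) + 1) E = 0"
proof -
  let ?n = "real CARD('n)"
  have small: "hausdorff_pre (?n + 1) \<delta> E \<le> ennreal e" if "0 < \<delta>" "0 < e" for \<delta> e
  proof -
    obtain M :: nat where M: "?n ^ (CARD('n) + 1) / e + ?n / \<delta> + 1 < M"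
      using reals_Archimedean2 by blast
    have nonneg: "0 \<le> ?n ^ (CARD('n) + 1) / e" "0 \<le> ?n / \<delta>" using that by auto
    then have M1: "1 \<le> M" using M by linarith
    have "?n / \<delta> < M" "?n ^ (CARD('n) + 1) / e < M" using M nonneg by linarith+
    then have "?n / M \<le> \<delta>" and "?n ^ (CARD('n) + 1) / M \<le> e"
      using that M1 by (simp_all add: divide_less_eq divide_le_eq mult.commute)
    then show ?thesis
      using hausdorff_pre_unit_cube_le[OF assms M1] by (meson ennreal_leI order_trans)
  qed
  have "hausdorff_pre (?n + 1) \<delta> E = 0" if "0 < \<delta>" for \<delta>
  proof -
    have "hausdorff_pre (?n + 1) \<delta> E \<le> 0"
      by (rule ennreal_le_epsilon) (use small[OF that] in simp)
    then show ?thesis by simp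
  qed
  then show ?thesis
    unfolding hausdorff_measure_def
    by (intro antisym SUP_least) (metis greaterThan_iff order_refl, simp)
qed

section \<open>The mass distribution principle\<close>

lemma compact_nested_subcover:
  fixes K V :: "nat \<Rightarrow> 'a::topological_space set"
  assumes "compact (K 0)" "decseq K" "\<And>J. closed (K J)" "\<And>i. open (V i)"
    and "(\<Inter>J. K J) \<subseteq> (\<Union>i. V i)"
  obtains J N where "K J \<subseteq> (\<Union>i<N. V i)"
proof -
  have cover: "K 0 \<subseteq> \<Union>(range V \<union> range (\<lambda>J. - K J))" using assms(5) by auto
  have "open B" if "B \<in> range V \<union> range (\<lambda>J. - K J)" for B
    using that assms(3,4) by auto
  then obtain \<T> where \<T>: "\<T> \<subseteq> range V \<union> range (\<lambda>J. - K J)" "finite \<T>" "K 0 \<subseteq> \<Union>\<T>"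
    using compactE[OF assms(1) cover] by blast
  obtain A where A: "finite A" "\<T> \<inter> range V = V ` A"
    using finite_subset_image[of "\<T> \<inter> range V" V UNIV] \<T>(2) by auto
  obtain B where B: "finite B" "\<T> \<inter> range (\<lambda>J. - K J) = (\<lambda>J. - K J) ` B"
    using finite_subset_image[of "\<T> \<inter> range (\<lambda>J. - K J)" "\<lambda>J. - K J" UNIV] \<T>(2) by auto
  obtain N where N: "A \<subseteq> {..<N}" using finite_nat_bounded[OF A(1)] by blast
  obtain J where J: "B \<subseteq> {..<J}" using finite_nat_bounded[OF B(1)] by blast
  have "K J \<subseteq> (\<Union>i<N. V i)"
  proof
    fix x assume x: "x \<in> K J"
    then have "x \<in> K 0" using assms(2) by (auto simp: decseq_def)
    then obtain T where T: "T \<in> \<T>" "x \<in> T" using \<T>(3) by auto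
    have "x \<in> K J'" if "J' \<in> B" for J'
    proof -
      have "J' \<le> J" using J that by auto
      then show ?thesis using x assms(2) by (auto simp: decseq_def)
    qed
    moreover have "T \<in> \<T> \<inter> range V \<or> T \<in> \<T> \<inter> range (\<lambda>J. - K J)"
      using T(1) \<T>(1) by blast
    ultimately have "T \<in> V ` A"
      unfolding A(2) B(2) using T(2) by blast
    then show "x \<in> (\<Union>i<N. V i)" using N T(2) by blast
  qed
  then show ?thesis by (rule that)
qed

locale cantor_scheme =
  fixes D :: "nat \<Rightarrow> 'b set" and piece :: "nat \<Rightarrow> 'b \<Rightarrow> 'a::metric_space set"
  assumes finite: "\<And>J. finite (D J)" and nonempty: "\<And>J. D J \<noteq> {}"
    and piece_nonempty: "\<And>J e. e \<in> D J \<Longrightarrow> piece J e \<noteq> {}"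
    and piece_compact: "\<And>J e. e \<in> D J \<Longrightarrow> compact (piece J e)"
    and nested: "decseq (\<lambda>J. \<Union>e\<in>D J. piece J e)"
    and fine: "\<And>\<epsilon>. 0 < \<epsilon> \<Longrightarrow> \<forall>\<^sub>F J in sequentially. \<forall>e\<in>D J. diameter (piece J e) < \<epsilon>"
begin

definition level :: "nat \<Rightarrow> 'a set" where "level J = (\<Union>e\<in>D J. piece J e)"

lemma compact_level: "compact (level J)"
  unfolding level_def using finite piece_compact by (intro compact_UN)

lemma pieces_inside_open_cover:
  fixes V :: "nat \<Rightarrow> 'a set"
  assumes "\<And>i. open (V i)" "(\<Inter>J. level J) \<subseteq> (\<Union>i. V i)"
  obtains J N where "\<And>e. e \<in> D J \<Longrightarrow> \<exists>i<N. piece J e \<subseteq> V i"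
proof -
  obtain J N where JN: "level J \<subseteq> (\<Union>i<N. V i)"
  proof (rule compact_nested_subcover[of level V])
    show "decseq level" using nested by (simp add: level_def[abs_def])
    show "closed (level J)" for J using compact_level by (rule compact_imp_closed)
  qed (rule compact_level assms)+
  obtain \<epsilon> where \<epsilon>: "0 < \<epsilon>" "\<And>x. x \<in> level J \<Longrightarrow> \<exists>G \<in> V ` {..<N}. ball x \<epsilon> \<subseteq> G"
    using Heine_Borel_lemma[OF compact_level, of J "V ` {..<N}"] JN assms(1) by blast
  obtain J' where J': "J \<le> J'" "\<forall>e\<in>D J'. diameter (piece J' e) < \<epsilon>"
    using eventually_conj[OF eventually_ge_at_top[of J] fine[OF \<epsilon>(1)]]
    by (auto simp: eventually_sequentially)
  have "\<exists>i<N. piece J' e \<subseteq> V i" if e: "e \<in> D J'" for e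
  proof -
    obtain x where x: "x \<in> piece J' e" using piece_nonempty[OF e] by auto
    have "level J' \<subseteq> level J" using nested J'(1) by (simp add: level_def decseq_def)
    then have "x \<in> level J" using e x by (auto simp: level_def)
    then obtain i where i: "i < N" "ball x \<epsilon> \<subseteq> V i" using \<epsilon>(2) by auto
    have "piece J' e \<subseteq> ball x \<epsilon>"
    proof
      fix y assume "y \<in> piece J' e"
      then have "dist x y \<le> diameter (piece J' e)"
        using x e piece_compact by (intro diameter_bounded_bound) (auto intro: compact_imp_bounded)
      then show "y \<in> ball x \<epsilon>" using J'(2) e by fastforce
    qed
    then show ?thesis using i by auto
  qed
  then show ?thesis by (rule that)
qed

lemma open_cover_weight_ge_1:
  fixes V :: "nat \<Rightarrow> 'a set"
  assumes weight: "\<And>J i. real (card {e \<in> D J. piece J e \<subseteq> V i}) \<le> \<mu> i * real (card (D J))"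
    and "\<And>i. open (V i)" "(\<Inter>J. level J) \<subseteq> (\<Union>i. V i)"
  obtains N where "1 \<le> (\<Sum>i<N. \<mu> i)"
proof -
  obtain J N where JN: "\<And>e. e \<in> D J \<Longrightarrow> \<exists>i<N. piece J e \<subseteq> V i"
    by (rule pieces_inside_open_cover[OF assms(2,3)]) blast
  then have "D J \<subseteq> (\<Union>i<N. {e \<in> D J. piece J e \<subseteq> V i})" by blast
  then have "card (D J) \<le> card (\<Union>i<N. {e \<in> D J. piece J e \<subseteq> V i})"
    using finite by (intro card_mono) auto
  also have "\<dots> \<le> (\<Sum>i<N. card {e \<in> D J. piece J e \<subseteq> V i})"
    by (rule card_UN_le) simp
  finally have "real (card (D J)) \<le> (\<Sum>i<N. real (card {e \<in> D J. piece J e \<subseteq> V i}))"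
    by (metis of_nat_le_iff of_nat_sum)
  also have "\<dots> \<le> (\<Sum>i<N. \<mu> i * real (card (D J)))"
    by (intro sum_mono weight)
  finally have "real (card (D J)) \<le> (\<Sum>i<N. \<mu> i) * real (card (D J))"
    by (simp add: sum_distrib_right)
  moreover have "0 < card (D J)" using finite nonempty by (simp add: card_gt_0_iff)
  ultimately show ?thesis using that by simp
qed

end

lemma open_thickening:
  fixes U :: "'a::real_normed_vector set"
  assumes "bounded U" "0 < r"
  shows "open (\<Union>u\<in>U. ball u r)" "bounded (\<Union>u\<in>U. ball u r)" "U \<subseteq> (\<Union>u\<in>U. ball u r)"
    and "diameter (\<Union>u\<in>U. ball u r) \<le> diameter U + 2 * r"
proof -
  show "open (\<Union>u\<in>U. ball u r)" by auto
  show "U \<subseteq> (\<Union>u\<in>U. ball u r)" using assms(2) by auto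
  obtain B where B: "\<forall>x\<in>U. norm x \<le> B" using assms(1) by (auto simp: bounded_iff)
  have "norm x \<le> B + r" if x: "x \<in> (\<Union>u\<in>U. ball u r)" for x
  proof -
    obtain u where "u \<in> U" "dist u x < r" using x by auto
    then show ?thesis using B norm_triangle_ineq2[of x u] by (auto simp: dist_norm norm_minus_commute)
  qed
  then show "bounded (\<Union>u\<in>U. ball u r)" unfolding bounded_iff by blast
  show "diameter (\<Union>u\<in>U. ball u r) \<le> diameter U + 2 * r"
  proof (rule diameter_le)
    show "(\<Union>u\<in>U. ball u r) \<noteq> {} \<or> 0 \<le> diameter U + 2 * r"
      using assms diameter_ge_0[OF assms(1)] by simp
    fix x y assume "x \<in> (\<Union>u\<in>U. ball u r)" "y \<in> (\<Union>u\<in>U. ball u r)"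
    then obtain u v where uv: "u \<in> U" "v \<in> U" "dist u x < r" "dist v y < r" by auto
    have "dist u v \<le> diameter U" by (rule diameter_bounded_bound[OF assms(1) uv(1,2)])
    then have "dist x y \<le> diameter U + 2 * r"
      using uv(3,4) dist_triangle[of x y u] dist_triangle[of u y v] by (simp add: dist_commute)
    then show "norm (x - y) \<le> diameter U + 2 * r" by (simp add: dist_norm)
  qed
qed

lemma powr_add_le:
  fixes x y s :: real
  assumes "0 \<le> x" "0 \<le> y" "0 \<le> s"
  shows "(x + y) powr s \<le> 2 powr s * (x powr s + y powr s)"
proof -
  have "(x + y) powr s \<le> (2 * max x y) powr s" using assms by (intro powr_mono2) auto
  also have "\<dots> = 2 powr s * max x y powr s" using assms by (simp add: powr_mult)
  also have "max x y powr s \<le> x powr s + y powr s" by (simp add: max_def)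
  finally show ?thesis by simp
qed

lemma thicken_cover:
  fixes U :: "nat \<Rightarrow> 'a::real_normed_vector set"
  assumes "\<And>i. bounded (U i)" "\<And>i. diameter (U i) \<le> 1/4" "0 < \<epsilon>" "0 < s"
  obtains V where "\<And>i. open (V i)" "\<And>i. bounded (V i)" "\<And>i. U i \<subseteq> V i" "\<And>i. diameter (V i) \<le> 1"
    "\<And>i. diameter (V i) powr s \<le> 2 powr s * (diameter (U i) powr s + \<epsilon> / 2 ^ i)"
proof -
  define r where "r i = min (1/2) ((\<epsilon> / 2 ^ i) powr (1 / s)) / 2" for i
  have r: "0 < r i" "2 * r i \<le> 1/2" "(2 * r i) powr s \<le> \<epsilon> / 2 ^ i" for i
  proof -
    show "0 < r i" "2 * r i \<le> 1/2" using assms(3) by (auto simp: r_def)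
    have "(2 * r i) powr s \<le> ((\<epsilon> / 2 ^ i) powr (1 / s)) powr s"
      using assms(3,4) by (intro powr_mono2) (auto simp: r_def)
    also have "\<dots> = \<epsilon> / 2 ^ i" using assms(3,4) by (simp add: powr_powr)
    finally show "(2 * r i) powr s \<le> \<epsilon> / 2 ^ i" .
  qed
  define V where "V i = (\<Union>u\<in>U i. ball u (r i))" for i
  have V: "open (V i)" "bounded (V i)" "U i \<subseteq> V i" "diameter (V i) \<le> diameter (U i) + 2 * r i" for i
    unfolding V_def by (rule open_thickening[OF assms(1) r(1)])+
  show ?thesis
  proof (rule that[OF V(1-3)])
    show "diameter (V i) \<le> 1" for i using V(4)[of i] assms(2)[of i] r(2)[of i] by linarith
    show "diameter (V i) powr s \<le> 2 powr s * (diameter (U i) powr s + \<epsilon> / 2 ^ i)" for i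
    proof -
      have "diameter (V i) powr s \<le> (diameter (U i) + 2 * r i) powr s"
        using V assms(4) by (intro powr_mono2) (auto intro: diameter_ge_0)
      also have "\<dots> \<le> 2 powr s * (diameter (U i) powr s + (2 * r i) powr s)"
        using assms(1,4) r(1) by (intro powr_add_le) (auto intro: diameter_ge_0 less_imp_le)
      also have "\<dots> \<le> 2 powr s * (diameter (U i) powr s + \<epsilon> / 2 ^ i)"
        using r(3)[of i] by simp
      finally show ?thesis .
    qed
  qed
qed

lemma sum_halving_le: "(\<Sum>i<N. \<epsilon> / 2 ^ i) \<le> 2 * (\<epsilon>::real)" if "0 \<le> \<epsilon>"
proof -
  have "(\<Sum>i<N. (1/2::real) ^ i) \<le> 2" by (simp add: sum_gp_strict)
  have "(\<Sum>i<N. \<epsilon> / 2 ^ i) = \<epsilon> * (\<Sum>i<N. (1/2::real) ^ i)"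
    unfolding sum_distrib_left by (simp add: power_one_over)
  also have "\<dots> \<le> \<epsilon> * 2" using \<open>(\<Sum>i<N. (1/2::real) ^ i) \<le> 2\<close> that by (rule mult_left_mono)
  finally show ?thesis by simp
qed

theorem mass_distribution_principle:
  fixes piece :: "nat \<Rightarrow> 'b \<Rightarrow> 'a::real_normed_vector set"
  assumes "cantor_scheme D piece"
    and count: "\<And>J V. bounded V \<Longrightarrow> diameter V \<le> 1 \<Longrightarrow>
        real (card {e \<in> D J. piece J e \<subseteq> V}) \<le> C * diameter V powr s * real (card (D J))"
    and limit: "(\<Inter>J. cantor_scheme.level D piece J) \<subseteq> E" and "0 < s" "0 < C"
  shows "hausdorff_measure s E \<noteq> 0"
proof -
  interpret cantor_scheme D piece by fact
  define \<epsilon> where "\<epsilon> = 1 / (4 * C * 2 powr s)"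
  have \<epsilon>: "0 < \<epsilon>" using \<open>0 < C\<close> by (simp add: \<epsilon>_def)
  have "ennreal (1 / (2 * C * 2 powr s)) \<le> hausdorff_pre s (1/4) E"
    unfolding hausdorff_pre_def
  proof (rule INF_greatest)
    fix U :: "nat \<Rightarrow> 'a set"
    assume "U \<in> {U. E \<subseteq> (\<Union>i. U i) \<and> (\<forall>i. bounded (U i) \<and> diameter (U i) \<le> 1/4)}"
    then have cover: "E \<subseteq> (\<Union>i. U i)" and "\<And>i. bounded (U i)" "\<And>i. diameter (U i) \<le> 1/4"
      by auto
    then obtain V where V: "\<And>i. open (V i)" "\<And>i. bounded (V i)" "\<And>i. U i \<subseteq> V i"
      "\<And>i. diameter (V i) \<le> 1"
      and weight_V: "\<And>i. diameter (V i) powr s \<le> 2 powr s * (diameter (U i) powr s + \<epsilon> / 2 ^ i)"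
      using thicken_cover \<epsilon> \<open>0 < s\<close> by metis
    have weight: "real (card {e \<in> D J. piece J e \<subseteq> V i}) \<le> C * diameter (V i) powr s * real (card (D J))"
      for J i by (rule count[OF V(2,4)])
    have "(\<Union>i. U i) \<subseteq> (\<Union>i. V i)" using V(3) by auto
    then have "(\<Inter>J. level J) \<subseteq> (\<Union>i. V i)" using limit cover by (meson order_trans)
    then obtain N where "1 \<le> (\<Sum>i<N. C * diameter (V i) powr s)"
      by (rule open_cover_weight_ge_1[where \<mu> = "\<lambda>i. C * diameter (V i) powr s", OF weight V(1)])
    also have "\<dots> \<le> (\<Sum>i<N. C * (2 powr s * (diameter (U i) powr s + \<epsilon> / 2 ^ i)))"
      using weight_V \<open>0 < C\<close> by (intro sum_mono mult_left_mono) auto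
    also have "\<dots> = C * 2 powr s * ((\<Sum>i<N. diameter (U i) powr s) + (\<Sum>i<N. \<epsilon> / 2 ^ i))"
      by (simp add: sum_distrib_left sum.distrib algebra_simps)
    also have "\<dots> \<le> C * 2 powr s * ((\<Sum>i<N. diameter (U i) powr s) + 2 * \<epsilon>)"
      using sum_halving_le[of \<epsilon> N] \<epsilon> \<open>0 < C\<close> by (intro mult_left_mono) auto
    finally have "1 / (2 * C * 2 powr s) \<le> (\<Sum>i<N. diameter (U i) powr s)"
      using \<open>0 < C\<close> by (simp add: \<epsilon>_def field_simps)
    then have "ennreal (1 / (2 * C * 2 powr s)) \<le> (\<Sum>i<N. ennreal (diameter (U i) powr s))"
      by (simp add: ennreal_leI sum_ennreal)
    also have "\<dots> \<le> (\<Sum>i. ennreal (diameter (U i) powr s))"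
      by (rule sum_le_suminf) auto
    finally show "ennreal (1 / (2 * C * 2 powr s)) \<le> (\<Sum>i. ennreal (diameter (U i) powr s))" .
  qed
  also have "\<dots> \<le> hausdorff_measure s E" by (rule hausdorff_pre_le_hausdorff_measure) simp
  finally have "ennreal (1 / (2 * C * 2 powr s)) \<le> hausdorff_measure s E" .
  moreover have "0 < 1 / (2 * C * 2 powr s)" using \<open>0 < C\<close> by simp
  ultimately show ?thesis by (metis ennreal_eq_0_iff leD le_zero_eq)
qed

section \<open>Nested lattice intervals\<close>

lemma lattice_window_eq:
  fixes s y r :: real
  assumes "0 < s"
  shows "{t::int. \<bar>of_int t * s - y\<bar> \<le> r} = {\<lceil>(y - r) / s\<rceil>..\<lfloor>(y + r) / s\<rfloor>}"
  using assms by (auto simp: abs_le_iff ceiling_le_iff le_floor_iff field_simps)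

lemma finite_lattice_window:
  fixes s y r :: real
  assumes "0 < s"
  shows "finite {t::int. \<bar>of_int t * s - y\<bar> \<le> r}"
  unfolding lattice_window_eq[OF assms] by simp

lemma card_lattice_window:
  fixes s y r :: real
  assumes "0 < s" "0 \<le> r"
  shows "real (card {t::int. \<bar>of_int t * s - y\<bar> \<le> r}) \<le> 2 * r / s + 1"
proof -
  let ?a = "\<lceil>(y - r) / s\<rceil>" and ?b = "\<lfloor>(y + r) / s\<rfloor>"
  have "real (card {t::int. \<bar>of_int t * s - y\<bar> \<le> r}) = real (nat (?b + 1 - ?a))"
    using assms(1) by (simp add: lattice_window_eq)
  also have "\<dots> \<le> 2 * r / s + 1"
  proof (cases "0 \<le> ?b + 1 - ?a")
    case True
    have "real_of_int ?b \<le> (y + r) / s" "(y - r) / s \<le> real_of_int ?a" by simp_all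
    moreover have "(y + r) / s - (y - r) / s = 2 * r / s" by (simp add: diff_divide_distrib[symmetric])
    ultimately show ?thesis using True by linarith
  qed (use assms in simp)
  finally show ?thesis .
qed

text \<open>Level \<open>j\<close> consists of closed intervals of radius \<open>h j\<close> centred on the lattice \<open>s j \<int>\<close>. The
  children of an interval are the \<open>num_children j\<close> level-\<open>(j+1)\<close> intervals centred at consecutive
  lattice points of its left half. An address lists the choices of children, the most recent first;
  the root is the interval centred at \<open>s 0\<close>.\<close>

locale nested_lattice_intervals =
  fixes s h :: "nat \<Rightarrow> real"
  assumes spacing_pos: "\<And>j. 0 < s j" and radius_pos: "\<And>j. 0 < h j"
    and radius_halves: "\<And>j. h (Suc j) \<le> h j / 2"
    and spacing_le_radius: "\<And>j. 2 * s (Suc j) \<le> h j"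
    and radius_lt_spacing: "\<And>j. 1 \<le> j \<Longrightarrow> 2 * h j < s j"
begin

definition num_children :: "nat \<Rightarrow> nat" where
  "num_children j = nat \<lfloor>h j / (2 * s (Suc j))\<rfloor>"

definition first_child :: "nat \<Rightarrow> int \<Rightarrow> int" where
  "first_child j t = \<lceil>(of_int t * s j - h j / 2) / s (Suc j)\<rceil>"

fun lattice_index :: "nat list \<Rightarrow> int" where
  "lattice_index [] = 1"
| "lattice_index (u # xs) = first_child (length xs) (lattice_index xs) + int u"

fun addresses :: "nat \<Rightarrow> nat list set" where
  "addresses 0 = {[]}"
| "addresses (Suc j) = (\<lambda>(u, xs). u # xs) ` ({..<num_children j} \<times> addresses j)"

definition center_of :: "nat list \<Rightarrow> real" where
  "center_of xs = of_int (lattice_index xs) * s (length xs)"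

definition interval_of :: "nat list \<Rightarrow> real set" where
  "interval_of xs = {center_of xs - h (length xs) .. center_of xs + h (length xs)}"

definition num_addresses :: "nat \<Rightarrow> nat" where
  "num_addresses j = (\<Prod>i<j. num_children i)"

lemma length_addresses: "xs \<in> addresses j \<Longrightarrow> length xs = j"
  by (induction j arbitrary: xs) auto

lemma finite_addresses: "finite (addresses j)"
  by (induction j) auto

lemma inj_on_Cons_pair: "inj_on (\<lambda>(u::nat, xs). u # xs) A"
  by (auto simp: inj_on_def)

lemma card_addresses: "card (addresses j) = num_addresses j"
proof (induction j)
  case 0 then show ?case by (simp add: num_addresses_def)
next
  case (Suc j)
  have "card (addresses (Suc j)) = card ({..<num_children j} \<times> addresses j)"
    by (simp add: card_image[OF inj_on_Cons_pair])
  also have "\<dots> = num_children j * num_addresses j" using Suc by (simp add: card_cartesian_product)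
  finally show ?case by (simp add: num_addresses_def)
qed

lemma num_addresses_Suc: "num_addresses (Suc j) = num_addresses j * num_children j"
  by (simp add: num_addresses_def)

lemma num_children_ge_1: "1 \<le> num_children j"
proof -
  have "1 \<le> h j / (2 * s (Suc j))" using spacing_le_radius[of j] spacing_pos[of "Suc j"] by simp
  then show ?thesis unfolding num_children_def by linarith
qed

lemma num_addresses_pos: "0 < num_addresses j"
proof -
  have "\<And>a. 0 < num_children a" using num_children_ge_1 by (simp add: Suc_le_eq)
  then show ?thesis by (simp add: num_addresses_def prod_pos)
qed

lemma num_children_lower: "h j / (4 * s (Suc j)) \<le> real (num_children j)"
proof -
  define x where "x = h j / (2 * s (Suc j))"
  have x1: "1 \<le> x" using spacing_le_radius[of j] spacing_pos[of "Suc j"] by (simp add: x_def)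
  have "x / 2 \<le> of_int \<lfloor>x\<rfloor>"
  proof (cases "x < 2")
    case True
    have "1 \<le> \<lfloor>x\<rfloor>" using x1 by (simp add: le_floor_iff)
    then show ?thesis using True by linarith
  next
    case False then show ?thesis using floor_correct[of x] by linarith
  qed
  moreover have "h j / (4 * s (Suc j)) = x / 2" by (simp add: x_def)
  moreover have "real (num_children j) = of_int \<lfloor>x\<rfloor>" using x1 by (simp add: num_children_def x_def)
  ultimately show ?thesis by simp
qed

lemma num_children_upper: "real (num_children j) * s (Suc j) \<le> h j / 2"
proof -
  define x where "x = h j / (2 * s (Suc j))"
  have x1: "1 \<le> x" using spacing_le_radius[of j] spacing_pos[of "Suc j"] by (simp add: x_def)
  have "real (num_children j) = of_int \<lfloor>x\<rfloor>" using x1 by (simp add: num_children_def x_def)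
  also have "\<dots> \<le> x" by simp
  finally have "real (num_children j) * s (Suc j) \<le> x * s (Suc j)" using spacing_pos[of "Suc j"]
    by (simp add: mult_right_mono)
  also have "\<dots> = h j / 2" using spacing_pos[of "Suc j"] by (simp add: x_def field_simps)
  finally show ?thesis .
qed

lemma child_center_bounds:
  assumes "u < num_children (length xs)"
  shows "center_of xs - h (length xs) / 2 \<le> center_of (u # xs)" "center_of (u # xs) \<le> center_of xs"
proof -
  let ?j = "length xs"
  let ?s = "s (Suc ?j)"
  have sp: "0 < ?s" by (rule spacing_pos)
  define z where "z = (of_int (lattice_index xs) * s ?j - h ?j / 2) / ?s"
  have ctr_eq: "center_of (u # xs) = (of_int \<lceil>z\<rceil> + real u) * ?s"
    by (simp add: center_of_def first_child_def z_def)
  have "z \<le> of_int \<lceil>z\<rceil>" by simp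
  then have "z \<le> of_int \<lceil>z\<rceil> + real u" by linarith
  then have "z * ?s \<le> (of_int \<lceil>z\<rceil> + real u) * ?s" using sp
    by (intro mult_right_mono) auto
  moreover have "z * ?s = center_of xs - h ?j / 2" using sp by (simp add: z_def center_of_def)
  ultimately show "center_of xs - h ?j / 2 \<le> center_of (u # xs)" using ctr_eq by simp
  have "of_int \<lceil>z\<rceil> < z + 1" by linarith
  have "real u + 1 \<le> real (num_children ?j)" using assms by simp
  then have "(of_int \<lceil>z\<rceil> + real u) * ?s \<le> (z + real (num_children ?j)) * ?s"
    using \<open>of_int \<lceil>z\<rceil> < z + 1\<close> sp by (intro mult_right_mono) auto
  also have "\<dots> = center_of xs - h ?j / 2 + real (num_children ?j) * ?s" using sp
    by (simp add: z_def center_of_def field_simps)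
  also have "\<dots> \<le> center_of xs" using num_children_upper[of ?j] by simp
  finally show "center_of (u # xs) \<le> center_of xs" using ctr_eq by simp
qed

lemma interval_child_subset:
  assumes "u < num_children (length xs)"
  shows "interval_of (u # xs) \<subseteq> interval_of xs"
  using child_center_bounds[OF assms] radius_halves[of "length xs"]
  by (auto simp: interval_of_def)

lemma child_center_in_interval: "u < num_children (length xs) \<Longrightarrow> center_of (u # xs) \<in> interval_of xs"
  using child_center_bounds[of u xs] radius_pos[of "length xs"] by (auto simp: interval_of_def)

lemma inj_on_lattice_index: "inj_on lattice_index (addresses j)"
proof (induction j)
  case 0 then show ?case by simp
next
  case (Suc j)
  show ?case
  proof (rule inj_onI)
    fix ys zs assume ys: "ys \<in> addresses (Suc j)" and zs: "zs \<in> addresses (Suc j)"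
      and eq: "lattice_index ys = lattice_index zs"
    obtain u xs where ys_eq: "ys = u # xs" and u: "u < num_children j" and xs: "xs \<in> addresses j"
      using ys by auto
    obtain v ws where zs_eq: "zs = v # ws" and v: "v < num_children j" and ws: "ws \<in> addresses j"
      using zs by auto
    have lx: "length xs = j" "length ws = j" using xs ws length_addresses by auto
    show "ys = zs"
    proof (cases "xs = ws")
      case True
      then show ?thesis using eq ys_eq zs_eq by simp
    next
      case False
      then have pne: "lattice_index xs \<noteq> lattice_index ws" using Suc.IH xs ws by (auto dest: inj_onD)
      have j1: "1 \<le> j"
      proof (rule ccontr)
        assume "\<not> 1 \<le> j" then have "j = 0" by simp
        then show False using xs ws False by simp
      qed
      have "center_of ys = center_of zs" using eq ys_eq zs_eq lx by (simp add: center_of_def)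
      moreover have "center_of ys \<in> interval_of xs"
        using child_center_in_interval[of u xs] u lx ys_eq by simp
      moreover have "center_of zs \<in> interval_of ws"
        using child_center_in_interval[of v ws] v lx zs_eq by simp
      moreover have "\<bar>center_of xs - center_of ws\<bar> \<ge> s j"
      proof -
        have "\<bar>lattice_index xs - lattice_index ws\<bar> \<ge> 1" using pne by linarith
        then have "real_of_int \<bar>lattice_index xs - lattice_index ws\<bar> \<ge> 1" by linarith
        then have "\<bar>real_of_int (lattice_index xs) - real_of_int (lattice_index ws)\<bar> * s j \<ge> 1 * s j"
          using spacing_pos[of j] by (intro mult_right_mono) auto
        then show ?thesis using lx spacing_pos[of j]
          by (simp add: center_of_def abs_mult left_diff_distrib[symmetric])
      qed
      ultimately show ?thesis using radius_lt_spacing[OF j1] lx by (auto simp: interval_of_def abs_le_iff)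
    qed
  qed
qed

definition inside_addrs :: "nat \<Rightarrow> real \<Rightarrow> real \<Rightarrow> nat list set" where
  "inside_addrs J y d = {xs \<in> addresses J. interval_of xs \<subseteq> {y - d .. y + d}}"

definition meeting_addrs :: "nat \<Rightarrow> real \<Rightarrow> real \<Rightarrow> nat list set" where
  "meeting_addrs J y d = {xs \<in> addresses J. interval_of xs \<inter> {y - d .. y + d} \<noteq> {}}"

definition inside_fraction :: "nat \<Rightarrow> real \<Rightarrow> real \<Rightarrow> real" where
  "inside_fraction J y d = real (card (inside_addrs J y d)) / real (num_addresses J)"

definition window_count :: "nat \<Rightarrow> real \<Rightarrow> real" where
  "window_count j d = (2 * d + 2 * h j) / s j + 1"

lemma finite_inside_addrs: "finite (inside_addrs J y d)"
  unfolding inside_addrs_def using finite_addresses by simp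

lemma finite_meeting_addrs: "finite (meeting_addrs J y d)"
  unfolding meeting_addrs_def using finite_addresses by simp

lemma interval_of_nonempty: "interval_of xs \<noteq> {}"
  using radius_pos[of "length xs"] by (simp add: interval_of_def)

lemma card_inside_le_meeting: "card (inside_addrs J y d) \<le> card (meeting_addrs J y d)"
proof (rule card_mono[OF finite_meeting_addrs])
  show "inside_addrs J y d \<subseteq> meeting_addrs J y d"
    unfolding inside_addrs_def meeting_addrs_def using interval_of_nonempty by blast
qed

lemma card_inside_Suc_ge: "num_children J * card (inside_addrs J y d) \<le> card (inside_addrs (Suc J) y d)"
proof -
  have sub: "(\<lambda>(u, xs). u # xs) ` ({..<num_children J} \<times> inside_addrs J y d) \<subseteq> inside_addrs (Suc J) y d"
  proof
    fix z assume "z \<in> (\<lambda>(u, xs). u # xs) ` ({..<num_children J} \<times> inside_addrs J y d)"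
    then obtain u xs where z: "z = u # xs" "u < num_children J" "xs \<in> inside_addrs J y d" by auto
    then have "length xs = J" using length_addresses by (auto simp: inside_addrs_def)
    then have "interval_of (u # xs) \<subseteq> interval_of xs" using interval_child_subset z by simp
    then show "z \<in> inside_addrs (Suc J) y d" using z by (auto simp: inside_addrs_def)
  qed
  have "num_children J * card (inside_addrs J y d)
      = card ((\<lambda>(u, xs). u # xs) ` ({..<num_children J} \<times> inside_addrs J y d))"
    by (simp add: card_image[OF inj_on_Cons_pair] card_cartesian_product)
  also have "\<dots> \<le> card (inside_addrs (Suc J) y d)" by (rule card_mono[OF finite_inside_addrs sub])
  finally show ?thesis .
qed

lemma card_meeting_Suc_le: "card (meeting_addrs (Suc J) y d) \<le> num_children J * card (meeting_addrs J y d)"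
proof -
  have sub: "meeting_addrs (Suc J) y d \<subseteq> (\<lambda>(u, xs). u # xs) ` ({..<num_children J} \<times> meeting_addrs J y d)"
  proof
    fix z assume "z \<in> meeting_addrs (Suc J) y d"
    then obtain u xs where z: "z = u # xs" "u < num_children J" "xs \<in> addresses J"
      and m: "interval_of (u # xs) \<inter> {y - d .. y + d} \<noteq> {}" by (auto simp: meeting_addrs_def)
    then have "length xs = J" using length_addresses by auto
    then have "interval_of (u # xs) \<subseteq> interval_of xs" using interval_child_subset z by simp
    then have "xs \<in> meeting_addrs J y d" using m z by (auto simp: meeting_addrs_def)
    then show "z \<in> (\<lambda>(u, xs). u # xs) ` ({..<num_children J} \<times> meeting_addrs J y d)" using z by auto
  qed
  have "card (meeting_addrs (Suc J) y d)
      \<le> card ((\<lambda>(u, xs). u # xs) ` ({..<num_children J} \<times> meeting_addrs J y d))"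
    by (rule card_mono[OF _ sub]) (simp add: finite_meeting_addrs)
  also have "\<dots> = num_children J * card (meeting_addrs J y d)"
    by (simp add: card_image[OF inj_on_Cons_pair] card_cartesian_product)
  finally show ?thesis .
qed

lemma center_near_if_meeting:
  assumes "interval_of xs \<inter> {y - d .. y + d} \<noteq> {}"
  shows "\<bar>center_of xs - y\<bar> \<le> d + h (length xs)"
  using assms by (auto simp: interval_of_def abs_le_iff)

lemma card_le_window_count:
  assumes "inj_on f A" "\<And>x. x \<in> A \<Longrightarrow> \<bar>of_int (f x) * s j - y\<bar> \<le> d + h j" "0 \<le> d"
  shows "real (card A) \<le> window_count j d"
proof -
  let ?T = "{t::int. \<bar>of_int t * s j - y\<bar> \<le> d + h j}"
  have "card A \<le> card ?T"
    using assms(1,2) by (intro card_inj_on_le finite_lattice_window spacing_pos) auto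
  then have "real (card A) \<le> real (card ?T)" by simp
  also have "\<dots> \<le> 2 * (d + h j) / s j + 1"
    using card_lattice_window[of "s j" "d + h j" y] spacing_pos radius_pos[of j] assms(3) by simp
  finally show ?thesis by (simp add: window_count_def distrib_left)
qed

lemma card_meeting_le_window:
  assumes "1 \<le> J" "0 \<le> d"
  shows "real (card (meeting_addrs J y d)) \<le> window_count J d"
proof (rule card_le_window_count[OF _ _ assms(2)])
  show "inj_on lattice_index (meeting_addrs J y d)"
    by (rule inj_on_subset[OF inj_on_lattice_index]) (auto simp: meeting_addrs_def)
  show "\<bar>of_int (lattice_index xs) * s J - y\<bar> \<le> d + h J" if "xs \<in> meeting_addrs J y d" for xs
    using that center_near_if_meeting[of xs y d] length_addresses
    by (auto simp: meeting_addrs_def center_of_def)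
qed

lemma card_meeting_children_le:
  assumes "length xs = J" "0 \<le> d"
  shows "real (card {u. u < num_children J \<and> interval_of (u # xs) \<inter> {y - d .. y + d} \<noteq> {}})
           \<le> window_count (Suc J) d"
proof (rule card_le_window_count[OF _ _ assms(2)])
  show "inj_on (\<lambda>u. first_child J (lattice_index xs) + int u)
      {u. u < num_children J \<and> interval_of (u # xs) \<inter> {y - d .. y + d} \<noteq> {}}"
    by (auto simp: inj_on_def)
  show "\<bar>of_int (first_child J (lattice_index xs) + int u) * s (Suc J) - y\<bar> \<le> d + h (Suc J)"
    if "u \<in> {u. u < num_children J \<and> interval_of (u # xs) \<inter> {y - d .. y + d} \<noteq> {}}" for u
    using that center_near_if_meeting[of "u # xs" y d] assms(1) by (auto simp: center_of_def)
qed

lemma card_meeting_Suc_le_window: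
  assumes "0 \<le> d"
  shows "real (card (meeting_addrs (Suc J) y d))
           \<le> real (card (meeting_addrs J y d)) * window_count (Suc J) d"
proof -
  define C where "C xs = {u. u < num_children J \<and> interval_of (u # xs) \<inter> {y - d .. y + d} \<noteq> {}}" for xs
  have "meeting_addrs (Suc J) y d \<subseteq> (\<lambda>(u, xs). u # xs) ` (\<Union>xs\<in>meeting_addrs J y d. C xs \<times> {xs})"
  proof
    fix z assume "z \<in> meeting_addrs (Suc J) y d"
    then obtain u xs where z: "z = u # xs" "u < num_children J" "xs \<in> addresses J"
      and m: "interval_of (u # xs) \<inter> {y - d .. y + d} \<noteq> {}" by (auto simp: meeting_addrs_def)
    then have "interval_of (u # xs) \<subseteq> interval_of xs" using interval_child_subset length_addresses by simp
    then have "xs \<in> meeting_addrs J y d" using m z by (auto simp: meeting_addrs_def)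
    then show "z \<in> (\<lambda>(u, xs). u # xs) ` (\<Union>xs\<in>meeting_addrs J y d. C xs \<times> {xs})"
      using z m by (auto simp: C_def)
  qed
  have fC: "finite (C xs)" for xs by (simp add: C_def)
  have "card (meeting_addrs (Suc J) y d)
      \<le> card ((\<lambda>(u, xs). u # xs) ` (\<Union>xs\<in>meeting_addrs J y d. C xs \<times> {xs}))"
    by (rule card_mono[OF _ \<open>meeting_addrs (Suc J) y d \<subseteq> _\<close>]) (simp add: finite_meeting_addrs fC)
  also have "\<dots> \<le> card (\<Union>xs\<in>meeting_addrs J y d. C xs \<times> {xs})"
    by (rule card_image_le) (simp add: finite_meeting_addrs fC)
  also have "\<dots> \<le> (\<Sum>xs\<in>meeting_addrs J y d. card (C xs))"
    using card_UN_le[OF finite_meeting_addrs, of "\<lambda>xs. C xs \<times> {xs}" J y d]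
    by (simp add: card_cartesian_product)
  finally have "real (card (meeting_addrs (Suc J) y d)) \<le> (\<Sum>xs\<in>meeting_addrs J y d. real (card (C xs)))"
    by (metis of_nat_le_iff of_nat_sum)
  also have "\<dots> \<le> (\<Sum>xs\<in>meeting_addrs J y d. window_count (Suc J) d)"
  proof (rule sum_mono)
    fix xs assume "xs \<in> meeting_addrs J y d"
    then have "length xs = J" using length_addresses by (simp add: meeting_addrs_def)
    then show "real (card (C xs)) \<le> window_count (Suc J) d"
      unfolding C_def by (rule card_meeting_children_le[OF _ assms])
  qed
  finally show ?thesis by simp
qed

lemma card_meeting_ratio_antimono:
  "j \<le> J \<Longrightarrow> card (meeting_addrs J y d) * num_addresses j \<le> card (meeting_addrs j y d) * num_addresses J"
proof (induction J)
  case 0 then show ?case by simp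
next
  case (Suc J)
  show ?case
  proof (cases "j = Suc J")
    case True then show ?thesis by simp
  next
    case False
    then have "j \<le> J" using Suc.prems by simp
    have "card (meeting_addrs (Suc J) y d) * num_addresses j
        \<le> num_children J * card (meeting_addrs J y d) * num_addresses j"
      using card_meeting_Suc_le by (simp add: mult_right_mono)
    also have "\<dots> = num_children J * (card (meeting_addrs J y d) * num_addresses j)" by simp
    also have "\<dots> \<le> num_children J * (card (meeting_addrs j y d) * num_addresses J)"
      using Suc.IH[OF \<open>j \<le> J\<close>] by simp
    also have "\<dots> = card (meeting_addrs j y d) * num_addresses (Suc J)" by (simp add: num_addresses_Suc)
    finally show ?thesis .
  qed
qed

lemma card_inside_ratio_mono:
  "J \<le> j \<Longrightarrow> card (inside_addrs J y d) * num_addresses j \<le> card (inside_addrs j y d) * num_addresses J"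
proof (induction j)
  case 0 then show ?case by simp
next
  case (Suc j)
  show ?case
  proof (cases "J = Suc j")
    case True then show ?thesis by simp
  next
    case False
    then have "J \<le> j" using Suc.prems by simp
    have "card (inside_addrs J y d) * num_addresses (Suc j)
        = num_children j * (card (inside_addrs J y d) * num_addresses j)"
      by (simp add: num_addresses_Suc)
    also have "\<dots> \<le> num_children j * (card (inside_addrs j y d) * num_addresses J)"
      using Suc.IH[OF \<open>J \<le> j\<close>] by simp
    also have "\<dots> = (num_children j * card (inside_addrs j y d)) * num_addresses J" by simp
    also have "\<dots> \<le> card (inside_addrs (Suc j) y d) * num_addresses J"
      using card_inside_Suc_ge by (simp add: mult_right_mono)
    finally show ?thesis .
  qed
qed

lemma inside_ratio_le_meeting_ratio:
  "real (card (inside_addrs J y d)) / real (num_addresses J)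
     \<le> real (card (meeting_addrs j y d)) / real (num_addresses j)"
proof -
  have PJ: "0 < real (num_addresses J)" and Pj: "0 < real (num_addresses j)" using num_addresses_pos by auto
  have "card (inside_addrs J y d) * num_addresses j \<le> card (meeting_addrs j y d) * num_addresses J"
  proof (cases "j \<le> J")
    case True
    have "card (inside_addrs J y d) * num_addresses j \<le> card (meeting_addrs J y d) * num_addresses j"
      using card_inside_le_meeting by simp
    also have "\<dots> \<le> card (meeting_addrs j y d) * num_addresses J"
      by (rule card_meeting_ratio_antimono[OF True])
    finally show ?thesis .
  next
    case False
    then have "J \<le> j" by simp
    have "card (inside_addrs J y d) * num_addresses j \<le> card (inside_addrs j y d) * num_addresses J"
      by (rule card_inside_ratio_mono[OF \<open>J \<le> j\<close>])
    also have "\<dots> \<le> card (meeting_addrs j y d) * num_addresses J" using card_inside_le_meeting by simp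
    finally show ?thesis .
  qed
  then have "real (card (inside_addrs J y d)) * real (num_addresses j)
      \<le> real (card (meeting_addrs j y d)) * real (num_addresses J)"
    by (metis of_nat_le_iff of_nat_mult)
  then show ?thesis using PJ Pj by (simp add: divide_simps)
qed

lemma inside_fraction_nonneg: "0 \<le> inside_fraction J y d"
  by (simp add: inside_fraction_def)

lemma window_count_nonneg: "0 \<le> d \<Longrightarrow> 0 \<le> window_count j d"
  using spacing_pos[of j] radius_pos[of j] by (simp add: window_count_def)

lemma inside_fraction_le_one_level:
  assumes "1 \<le> j" "0 \<le> d"
  shows "inside_fraction J y d \<le> window_count j d / real (num_addresses j)"
  using inside_ratio_le_meeting_ratio[of J y d j] card_meeting_le_window[OF assms, of y]
    num_addresses_pos[of j]
  unfolding inside_fraction_def by (smt (verit) divide_right_mono of_nat_0_le_iff)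

lemma inside_fraction_le_two_levels:
  assumes "1 \<le> j" "0 \<le> d"
  shows "inside_fraction J y d \<le> window_count j d * window_count (Suc j) d / real (num_addresses (Suc j))"
proof -
  have "real (card (meeting_addrs (Suc j) y d))
      \<le> real (card (meeting_addrs j y d)) * window_count (Suc j) d"
    by (rule card_meeting_Suc_le_window[OF assms(2)])
  also have "\<dots> \<le> window_count j d * window_count (Suc j) d"
    using card_meeting_le_window[OF assms] window_count_nonneg[OF assms(2)] by (rule mult_right_mono)
  finally show ?thesis
    using inside_ratio_le_meeting_ratio[of J y d "Suc j"] num_addresses_pos[of "Suc j"]
    unfolding inside_fraction_def by (smt (verit) divide_right_mono of_nat_0_le_iff)
qed

lemma window_count_le_small:
  assumes "1 \<le> j" "0 \<le> d" "d \<le> s j"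
  shows "window_count j d \<le> 4"
proof -
  have "2 * d + 2 * h j \<le> 3 * s j" using radius_lt_spacing[OF assms(1)] assms by linarith
  then show ?thesis using spacing_pos[of j] by (simp add: window_count_def divide_le_eq)
qed

lemma window_count_le_large:
  assumes "1 \<le> j" "s j \<le> d"
  shows "window_count j d \<le> 4 * d / s j"
proof -
  have "window_count j d = (2 * d + 2 * h j + s j) / s j"
    using spacing_pos[of j] by (simp add: window_count_def field_simps)
  also have "\<dots> \<le> 4 * d / s j"
    using radius_lt_spacing[OF assms(1)] assms spacing_pos[of j] by (intro divide_right_mono) auto
  finally show ?thesis .
qed

lemma num_addresses_Suc_lower:
  "h j / (4 * s (Suc j)) * real (num_addresses j) \<le> real (num_addresses (Suc j))"
  using mult_right_mono[OF num_children_lower[of j], of "real (num_addresses j)"]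
  by (simp add: num_addresses_Suc mult.commute)

lemma inside_fraction_le_small:
  assumes "1 \<le> j" "0 \<le> d" "d \<le> s j"
  shows "inside_fraction J y d \<le> 4 / real (num_addresses j)"
  using inside_fraction_le_one_level[OF assms(1,2)] window_count_le_small[OF assms] num_addresses_pos[of j]
  by (smt (verit) divide_right_mono of_nat_0_le_iff)

lemma inside_fraction_le_large:
  assumes "1 \<le> j" "s j \<le> d"
  shows "inside_fraction J y d \<le> 4 * d / (s j * real (num_addresses j))"
proof -
  have "0 \<le> d" using assms spacing_pos[of j] by linarith
  then have "inside_fraction J y d \<le> window_count j d / real (num_addresses j)"
    by (rule inside_fraction_le_one_level[OF assms(1)])
  also have "\<dots> \<le> (4 * d / s j) / real (num_addresses j)"
    using window_count_le_large[OF assms] num_addresses_pos[of j] by (intro divide_right_mono) auto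
  finally show ?thesis by simp
qed

text \<open>The last two bounds trade one factor \<open>s (Suc j)\<close> for the \<open>h j / (4 s (Suc j))\<close> children
  per level-\<open>j\<close> interval.\<close>

lemma inside_fraction_le_coarse:
  assumes "s (Suc j) \<le> d"
  shows "inside_fraction J y d \<le> 16 * d / (h j * real (num_addresses j))"
proof -
  have "inside_fraction J y d \<le> 4 * d / (s (Suc j) * real (num_addresses (Suc j)))"
    by (rule inside_fraction_le_large) (use assms in auto)
  also have "\<dots> \<le> 4 * d / (s (Suc j) * (h j / (4 * s (Suc j)) * real (num_addresses j)))"
    using assms spacing_pos[of "Suc j"] radius_pos[of j] num_addresses_pos[of j]
      num_addresses_pos[of "Suc j"] num_addresses_Suc_lower[of j]
    by (intro divide_left_mono mult_left_mono mult_pos_pos) auto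
  also have "\<dots> = 16 * d / (h j * real (num_addresses j))"
    using spacing_pos[of "Suc j"] by (simp add: field_simps)
  finally show ?thesis .
qed

lemma inside_fraction_le_intermediate:
  assumes "1 \<le> j" "d \<le> s j" "s (Suc j) \<le> d"
  shows "inside_fraction J y d \<le> 64 * d / (h j * real (num_addresses j))"
proof -
  have d: "0 < d" using assms spacing_pos[of "Suc j"] by linarith
  have "inside_fraction J y d \<le> window_count j d * window_count (Suc j) d / real (num_addresses (Suc j))"
    using assms(1) d by (intro inside_fraction_le_two_levels) auto
  also have "\<dots> \<le> 16 * d / s (Suc j) / real (num_addresses (Suc j))"
  proof (rule divide_right_mono)
    have "window_count j d * window_count (Suc j) d \<le> 4 * (4 * d / s (Suc j))"
      using window_count_le_small[OF assms(1) _ assms(2)] window_count_le_large[of "Suc j" d] assms d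
        window_count_nonneg[of d "Suc j"]
      by (intro mult_mono) auto
    then show "window_count j d * window_count (Suc j) d \<le> 16 * d / s (Suc j)" by simp
  qed simp
  also have "\<dots> \<le> 16 * d / s (Suc j) / (h j / (4 * s (Suc j)) * real (num_addresses j))"
    using d spacing_pos[of "Suc j"] radius_pos[of j] num_addresses_pos[of j] num_addresses_pos[of "Suc j"]
      num_addresses_Suc_lower[of j]
    by (intro divide_left_mono mult_pos_pos) auto
  also have "\<dots> = 64 * d / (h j * real (num_addresses j))"
    using spacing_pos[of "Suc j"] by (simp add: field_simps)
  finally show ?thesis .
qed

lemma radius_le: "h j \<le> h 0 / 2 ^ j"
proof (induction j)
  case (Suc j)
  have "h (Suc j) \<le> h j / 2" by (rule radius_halves)
  also have "\<dots> \<le> h 0 / 2 ^ Suc j" using Suc by simp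
  finally show ?case .
qed simp

lemma num_addresses_0 [simp]: "num_addresses 0 = 1"
  by (simp add: num_addresses_def)

end

section \<open>Estimates for one refinement step\<close>

lemma powr_le_powr_mult_of_ge:
  fixes d R p u s0 :: real
  assumes "0 < R" "R powr p \<le> d" "u \<le> s0"
  shows "d powr u \<le> d powr s0 * R powr (p * (u - s0))"
proof -
  have d: "0 < d" using assms powr_gt_zero[of R p] by linarith
  have "d powr (u - s0) \<le> (R powr p) powr (u - s0)"
    using assms by (intro powr_mono2') auto
  then have "d powr s0 * d powr (u - s0) \<le> d powr s0 * R powr (p * (u - s0))"
    by (simp add: powr_powr mult_left_mono)
  then show ?thesis using d by (simp add: powr_add[symmetric])
qed

lemma powr_le_powr_mult_of_le:
  fixes d R p u s0 :: real
  assumes "0 < R" "0 < d" "d \<le> R powr p" "s0 \<le> u"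
  shows "d powr u \<le> d powr s0 * R powr (p * (u - s0))"
proof -
  have "d powr (u - s0) \<le> (R powr p) powr (u - s0)"
    using assms by (intro powr_mono2) auto
  then have "d powr s0 * d powr (u - s0) \<le> d powr s0 * R powr (p * (u - s0))"
    by (simp add: powr_powr mult_left_mono)
  then show ?thesis using assms(2) by (simp add: powr_add[symmetric])
qed

lemma power_Suc_eq_powr: "0 < (d::real) \<Longrightarrow> d ^ Suc m = d powr (1 + real m)"
  by (metis of_nat_Suc powr_realpow add.commute)

text \<open>The quantities of one refinement step of the construction: \<open>R\<close> is the new scale, \<open>H1\<close> and
  \<open>H2\<close> the radii of the previous level, and \<open>P1\<close>, \<open>P2\<close> the numbers of intervals of the new level
  in the first and in the other directions.\<close>

locale refinement_step =
  fixes R c H1 H2 P1 P2 a s0 :: real and m :: nat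
  assumes R_ge_1: "1 \<le> R" and c_pos: "0 < c" and c_le_1: "c \<le> 1"
    and H1_pos: "0 < H1" and H2_pos: "0 < H2"
    and P1_ge: "H1 / (8 * R powr (1 - 2*a)) \<le> P1" and P2_ge: "H2 / (4 * R powr (-a)) \<le> P2"
begin

definition L1 :: real where "L1 = H1 / (8 * R powr (1 - 2*a))"
definition L2 :: real where "L2 = H2 / (4 * R powr (-a))"
definition \<alpha> :: real where "\<alpha> = 1/2 + real m * a + (2*a - 1)"

lemma R_pos: "0 < R" using R_ge_1 by simp

lemma L_pos: "0 < L1" "0 < L2"
  using H1_pos H2_pos R_pos by (auto simp: L1_def L2_def)

lemma c_power_le: "c ^ Suc m \<le> c" "c ^ Suc m \<le> 1"
proof -
  show "c ^ Suc m \<le> c" using c_pos c_le_1 by (simp add: mult_left_le power_le_one)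
  then show "c ^ Suc m \<le> 1" using c_le_1 by linarith
qed

lemma replace_by_lower_bounds:
  assumes "0 \<le> A" "0 < k" "0 \<le> B" "0 < l"
  shows "A / (k * P1) * (B / (l * P2)) ^ m \<le> A / (k * L1) * (B / (l * L2)) ^ m"
proof -
  have "L1 \<le> P1" "L2 \<le> P2" using P1_ge P2_ge by (simp_all add: L1_def L2_def)
  then show ?thesis
    using assms L_pos by (intro mult_mono power_mono divide_left_mono mult_left_mono mult_pos_pos) auto
qed

lemma le_powr_of_scale_condition:
  fixes d d' K e x C :: real
  assumes "0 < d" "0 \<le> d'" "d' \<le> d powr s0 * R powr x" "0 \<le> K" "K \<le> 1024 * 128 ^ m"
    and "1024 * 128 ^ m * R powr (e + x) \<le> c ^ Suc m * (H1 * H2 ^ m)" and "c ^ Suc m \<le> C"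
  shows "K * d' * R powr e / (C * (H1 * H2 ^ m)) \<le> d powr s0"
proof -
  have "K * d' * R powr e \<le> 1024 * 128 ^ m * (d powr s0 * R powr x) * R powr e"
    using assms by (intro mult_right_mono mult_mono) auto
  also have "\<dots> = d powr s0 * (1024 * 128 ^ m * R powr (e + x))" by (simp add: powr_add)
  also have "\<dots> \<le> d powr s0 * (c ^ Suc m * (H1 * H2 ^ m))"
    using assms(6) by (intro mult_left_mono) auto
  also have "\<dots> \<le> d powr s0 * (C * (H1 * H2 ^ m))"
    using assms(7) H1_pos H2_pos by (intro mult_left_mono mult_right_mono) auto
  moreover have "0 < C"
    using assms(7) zero_less_power[OF c_pos, of "Suc m"] by linarith
  then have "0 < C * (H1 * H2 ^ m)" using H1_pos H2_pos by simp
  ultimately show ?thesis by (simp add: pos_divide_le_eq)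
qed

lemma product_bound_le_R_inv:
  assumes "0 < d" "d \<le> R powr (-1)" "s0 \<le> 1 + real m"
    and "1024 * 128 ^ m * R powr (s0 - \<alpha>) \<le> c ^ Suc m * (H1 * H2 ^ m)"
  shows "16 * d / (c * R powr (-1/2) / 2 * P1) * (16 * d / (c * R powr (-1) / 2 * P2)) ^ m \<le> d powr s0"
proof -
  have "16 * d / (c * R powr (-1/2) / 2 * P1) * (16 * d / (c * R powr (-1) / 2 * P2)) ^ m
      \<le> 16 * d / (c * R powr (-1/2) / 2 * L1) * (16 * d / (c * R powr (-1) / 2 * L2)) ^ m"
    using assms(1) c_pos R_pos by (intro replace_by_lower_bounds) auto
  also have "\<dots> = (256 * 128 ^ m) * d ^ Suc m * R powr (3/2 - 2*a + real m - real m * a)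
      / (c ^ Suc m * (H1 * H2 ^ m))"
  proof -
    have e1: "R powr (-1/2) = 1 / R powr (1/2)" using powr_minus_divide[of R "1/2"] by simp
    have e1': "R powr (-1) = 1 / R" using powr_minus_divide[of R 1] R_pos by simp
    have e2: "16 * d / (c * (1 / R) / 2 * L2) = 128 * d * (R * R powr (-a)) / (c * H2)"
      using R_pos H2_pos c_pos by (simp add: L2_def field_simps)
    have "R * R powr (-a) = R powr (1 - a)"
      using R_pos by (simp add: powr_diff powr_minus_divide)
    then have e3: "R powr (1/2) * R powr (1 - 2*a) * (R * R powr (-a)) ^ m
        = R powr (3/2 - 2*a + real m - real m * a)"
      using R_pos by (simp add: powr_power powr_add[symmetric] algebra_simps)
    show ?thesis unfolding e1 e1' e2 e3[symmetric] using c_pos R_pos H1_pos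
      by (simp add: L1_def field_simps power_divide power_mult_distrib)
  qed
  also have "\<dots> \<le> d powr s0"
  proof (rule le_powr_of_scale_condition[where x = "-1 * (1 + real m - s0)"])
    show "d ^ Suc m \<le> d powr s0 * R powr (-1 * (1 + real m - s0))"
      using powr_le_powr_mult_of_le[OF R_pos assms(1,2,3)] by (simp only: power_Suc_eq_powr[OF assms(1)])
    have "3/2 - 2*a + real m - real m * a + -1 * (1 + real m - s0) = s0 - \<alpha>"
      by (simp add: \<alpha>_def algebra_simps)
    then show "1024 * 128 ^ m * R powr (3/2 - 2*a + real m - real m * a + -1 * (1 + real m - s0))
        \<le> c ^ Suc m * (H1 * H2 ^ m)"
      using assms(4) by (simp only:)
  qed (use assms(1) in auto)
  finally show ?thesis .
qed

lemma product_bound_ge_R_inv: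
  assumes "R powr (-1) \<le> d" "1 \<le> s0"
    and "1024 * 128 ^ m * R powr (s0 - \<alpha>) \<le> c ^ Suc m * (H1 * H2 ^ m)"
  shows "64 * d / (c * R powr (-1/2) / 2 * P1) * (4 / P2) ^ m \<le> d powr s0"
proof -
  have d: "0 < d" using assms(1) R_pos powr_gt_zero[of R "-1"] by linarith
  have "64 * d / (c * R powr (-1/2) / 2 * P1) * (4 / P2) ^ m
      \<le> 64 * d / (c * R powr (-1/2) / 2 * L1) * (4 / (1 * L2)) ^ m"
    using replace_by_lower_bounds[of "64 * d" "c * R powr (-1/2) / 2" 4 1] d c_pos R_pos by simp
  also have "\<dots> = (1024 * 16 ^ m) * d * R powr (3/2 - 2*a - real m * a) / (c * (H1 * H2 ^ m))"
  proof -
    have e1: "R powr (-1/2) = 1 / R powr (1/2)" using powr_minus_divide[of R "1/2"] by simp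
    have e2: "(4 / (1 * L2)) ^ m = 16 ^ m * (R powr (-a)) ^ m / H2 ^ m"
      by (simp add: L2_def power_divide power_mult_distrib)
    have e3: "R powr (1/2) * R powr (1 - 2*a) * (R powr (-a)) ^ m = R powr (3/2 - 2*a - real m * a)"
      using R_pos by (simp add: powr_power powr_add[symmetric] algebra_simps)
    show ?thesis unfolding e1 e2 e3[symmetric] using c_pos R_pos H1_pos by (simp add: L1_def field_simps)
  qed
  also have "\<dots> \<le> d powr s0"
  proof (rule le_powr_of_scale_condition[where x = "s0 - 1"])
    show "d \<le> d powr s0 * R powr (s0 - 1)"
      using powr_le_powr_mult_of_ge[OF R_pos assms(1), of 1 s0] assms(2) d by simp
    have "3/2 - 2*a - real m * a + (s0 - 1) = s0 - \<alpha>" by (simp add: \<alpha>_def algebra_simps)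
    then show "1024 * 128 ^ m * R powr (3/2 - 2*a - real m * a + (s0 - 1)) \<le> c ^ Suc m * (H1 * H2 ^ m)"
      using assms(3) by (simp only:)
    show "c ^ Suc m \<le> c" by (rule c_power_le)
  qed (use d in \<open>auto simp: power_mono\<close>)
  finally show ?thesis .
qed

lemma product_bound_le_R_sqrt_inv:
  assumes "0 < d" "d \<le> R powr (-1/2)" "s0 \<le> 1 + real m"
    and "1024 * 128 ^ m * R powr (3/2 - 2*a - (1 + real m - s0) / 2) \<le> c ^ Suc m * (H1 * H2 ^ m)"
  shows "64 * d / (c * R powr (-1/2) / 2 * P1) * (4 * d / (R powr (-a) * P2)) ^ m \<le> d powr s0"
proof -
  have "64 * d / (c * R powr (-1/2) / 2 * P1) * (4 * d / (R powr (-a) * P2)) ^ m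
      \<le> 64 * d / (c * R powr (-1/2) / 2 * L1) * (4 * d / (R powr (-a) * L2)) ^ m"
    using assms(1) c_pos R_pos by (intro replace_by_lower_bounds) auto
  also have "\<dots> = (1024 * 16 ^ m) * d ^ Suc m * R powr (3/2 - 2*a) / (c * (H1 * H2 ^ m))"
  proof -
    have e1: "R powr (-1/2) = 1 / R powr (1/2)" using powr_minus_divide[of R "1/2"] by simp
    have e2: "4 * d / (R powr (-a) * L2) = 16 * d / H2"
      using R_pos H2_pos by (simp add: L2_def field_simps)
    have e3: "R powr (1/2) * R powr (1 - 2*a) = R powr (3/2 - 2*a)"
      using R_pos by (simp add: powr_add[symmetric] algebra_simps)
    show ?thesis unfolding e1 e2 e3[symmetric] using c_pos R_pos H1_pos H2_pos
      by (simp add: L1_def field_simps power_divide power_mult_distrib)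
  qed
  also have "\<dots> \<le> d powr s0"
  proof (rule le_powr_of_scale_condition[where x = "-1/2 * (1 + real m - s0)"])
    show "d ^ Suc m \<le> d powr s0 * R powr (-1/2 * (1 + real m - s0))"
      using powr_le_powr_mult_of_le[OF R_pos assms(1,2,3)] by (simp only: power_Suc_eq_powr[OF assms(1)])
    have "3/2 - 2*a + -1/2 * (1 + real m - s0) = 3/2 - 2*a - (1 + real m - s0) / 2" by simp
    then show "1024 * 128 ^ m * R powr (3/2 - 2*a + -1/2 * (1 + real m - s0)) \<le> c ^ Suc m * (H1 * H2 ^ m)"
      using assms(4) by (simp only:)
    show "c ^ Suc m \<le> c" by (rule c_power_le)
  qed (use assms(1) in \<open>auto simp: power_mono\<close>)
  finally show ?thesis .
qed

lemma product_bound_ge_R_sqrt_inv: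
  assumes "R powr (-1/2) \<le> d" "d \<le> 1"
    and "1024 * 128 ^ m * R powr (3/2 - 2*a - (1 + real m - s0) / 2) \<le> c ^ Suc m * (H1 * H2 ^ m)"
    and "1024 * 128 ^ m * R powr (1 - 2*a) \<le> c ^ Suc m * (H1 * H2 ^ m)"
  shows "4 / P1 * (4 * d / (R powr (-a) * P2)) ^ m \<le> d powr s0"
proof -
  have d: "0 < d" using assms(1) R_pos powr_gt_zero[of R "-1/2"] by linarith
  have "4 / P1 * (4 * d / (R powr (-a) * P2)) ^ m \<le> 4 / (1 * L1) * (4 * d / (R powr (-a) * L2)) ^ m"
    using replace_by_lower_bounds[of 4 1 "4 * d" "R powr (-a)"] d R_pos by simp
  also have "\<dots> = (32 * 16 ^ m) * d ^ m * R powr (1 - 2*a) / (1 * (H1 * H2 ^ m))"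
  proof -
    have e: "4 * d / (R powr (-a) * L2) = 16 * d / H2"
      using R_pos H2_pos by (simp add: L2_def field_simps)
    show ?thesis unfolding e
      using R_pos H1_pos H2_pos by (simp add: L1_def field_simps power_divide power_mult_distrib)
  qed
  also have "\<dots> \<le> d powr s0"
  proof (cases "s0 \<le> real m")
    case True
    show ?thesis
    proof (rule le_powr_of_scale_condition[where x = 0])
      have "d powr real m \<le> d powr s0" using True d assms(2) by (intro powr_mono') auto
      then show "d ^ m \<le> d powr s0 * R powr 0" using d R_pos by (simp add: powr_realpow)
      show "1024 * 128 ^ m * R powr (1 - 2*a + 0) \<le> c ^ Suc m * (H1 * H2 ^ m)"
        using assms(4) by simp
      show "c ^ Suc m \<le> 1" by (rule c_power_le)
      show "32 * 16 ^ m \<le> (1024 * 128 ^ m :: real)" by (intro mult_mono power_mono) auto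
    qed (use d in auto)
  next
    case False
    show ?thesis
    proof (rule le_powr_of_scale_condition[where x = "-1/2 * (real m - s0)"])
      show "d ^ m \<le> d powr s0 * R powr (-1/2 * (real m - s0))"
        using powr_le_powr_mult_of_ge[OF R_pos assms(1), of "real m" s0] False d
        by (simp add: powr_realpow)
      have "1 - 2*a + -1/2 * (real m - s0) = 3/2 - 2*a - (1 + real m - s0) / 2" by (simp add: field_simps)
      then show "1024 * 128 ^ m * R powr (1 - 2*a + -1/2 * (real m - s0)) \<le> c ^ Suc m * (H1 * H2 ^ m)"
        using assms(3) by (simp only:)
      show "c ^ Suc m \<le> 1" by (rule c_power_le)
      show "32 * 16 ^ m \<le> (1024 * 128 ^ m :: real)" by (intro mult_mono power_mono) auto
    qed (use d in auto)
  qed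
  finally show ?thesis .
qed

end

section \<open>A Cantor set inside the set of divergence\<close>

text \<open>The construction for one exponent \<open>s0 < \<alpha>\<close>; \<open>m = n - 1\<close> is the number of directions other
  than \<open>i1\<close>.\<close>

locale divergence_construction =
  fixes i1 :: "'n::finite" and a c c0 s0 :: real and m :: nat
  assumes m_def: "m = CARD('n) - 1" and card_ge_2: "2 \<le> CARD('n)"
    and a_gt: "1/2 < a" and a_le: "a \<le> 3/4"
    and c_pos: "0 < c" and c_le: "c \<le> 1/2" and c0_pos: "0 < c0" and c0_le_1: "c0 \<le> 1"
    and s0_ge_1: "1 \<le> s0" and s0_lt: "s0 < 1/2 + real m * a + (2*a - 1)"
begin

definition \<alpha> :: real where "\<alpha> = 1/2 + real m * a + (2*a - 1)"

text \<open>Radii in the first and in the other directions at level \<open>j\<close> when the scale of that level is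
  \<open>2 ^ k\<close>; level 0 is the cube \<open>[0, c0] ^ n\<close>.\<close>

definition radius1 :: "nat \<Rightarrow> nat \<Rightarrow> real" where
  "radius1 j k = (if j = 0 then c0/2 else c * ((2::real) ^ k) powr (-1/2) / 2)"

definition radius2 :: "nat \<Rightarrow> nat \<Rightarrow> real" where
  "radius2 j k = (if j = 0 then c0/2 else c * ((2::real) ^ k) powr (-1) / 2)"

text \<open>The conditions on the exponent \<open>k'\<close> of the next scale: the first four make the levels nested,
  the fifth places the spacing of level \<open>j + 2\<close> below the side \<open>R (j+1) ^ -1\<close> of level \<open>j + 1\<close>,
  and the last three are the scale conditions of \<^locale>\<open>refinement_step\<close>.\<close>

definition next_scale_ok :: "nat \<Rightarrow> nat \<Rightarrow> nat \<Rightarrow> bool" where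
  "next_scale_ok j k k' \<longleftrightarrow>
     c * ((2::real) ^ k') powr (-1/2) \<le> radius1 j k \<and>
     c * ((2::real) ^ k') powr (-1) \<le> radius2 j k \<and>
     4 * ((2::real) ^ k') powr (1 - 2*a) \<le> radius1 j k \<and>
     2 * ((2::real) ^ k') powr (-a) \<le> radius2 j k \<and>
     (2 * 2 ^ k) * ((2::real) ^ k') powr (1 - 2*a) \<le> 1 \<and>
     1024 * 128 ^ m * ((2::real) ^ k') powr (s0 - \<alpha>) \<le> c ^ Suc m * (radius1 j k * radius2 j k ^ m) \<and>
     1024 * 128 ^ m * ((2::real) ^ k') powr (3/2 - 2*a - (1 + real m - s0) / 2)
       \<le> c ^ Suc m * (radius1 j k * radius2 j k ^ m) \<and>
     1024 * 128 ^ m * ((2::real) ^ k') powr (1 - 2*a) \<le> c ^ Suc m * (radius1 j k * radius2 j k ^ m)"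

lemma m_ge_1: "1 \<le> m" using card_ge_2 m_def by simp

lemma s0_lt_alpha: "s0 < \<alpha>" using s0_lt by (simp add: \<alpha>_def)

lemma s0_le: "s0 \<le> 1 + real m"
proof -
  have "real m * a \<le> real m * (3/4)" using a_le by (intro mult_left_mono) auto
  then show ?thesis using a_le m_ge_1 s0_lt_alpha unfolding \<alpha>_def by linarith
qed

lemma exponent_neg: "3/2 - 2*a - (1 + real m - s0) / 2 < 0"
proof -
  have "1 * (1 - a) \<le> real m * (1 - a)" using m_ge_1 a_le by (intro mult_right_mono) auto
  then have "\<alpha> \<le> real m + 4*a - 2" using a_gt by (simp add: \<alpha>_def algebra_simps)
  then show ?thesis using s0_lt_alpha by (simp add: field_simps)
qed

lemma eventually_powr_le:
  fixes A B e :: real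
  assumes "e < 0" "0 < B" "0 \<le> A"
  shows "eventually (\<lambda>k. A * ((2::real) ^ k) powr e \<le> B) sequentially"
proof (cases "A = 0")
  case False
  then have A: "0 < A" using assms by simp
  define T where "T = (B / A) powr (1 / e)"
  have T: "0 < T" using A assms by (simp add: T_def)
  obtain N where N: "T < 2 ^ N" using real_arch_pow[of 2 T] by auto
  show ?thesis
  proof (rule eventually_sequentiallyI[of N])
    fix k assume "N \<le> k"
    then have "T \<le> 2 ^ k" using N power_increasing[of N k "2::real"] by linarith
    then have "((2::real) ^ k) powr e \<le> T powr e" using powr_mono2'[of e T "2 ^ k"] assms T by simp
    also have "T powr e = B / A" using A assms by (simp add: T_def powr_powr)
    finally show "A * ((2::real) ^ k) powr e \<le> B" using A by (simp add: field_simps)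
  qed
qed (use assms in simp)

lemma next_scale_ok_exists: "\<exists>k'. k < k' \<and> next_scale_ok j k k'"
proof -
  have "0 < radius1 j k" "0 < radius2 j k" using c_pos c0_pos by (auto simp: radius1_def radius2_def)
  then have "eventually (next_scale_ok j k) sequentially"
    unfolding next_scale_ok_def using a_gt c_pos s0_lt_alpha exponent_neg
    by (intro eventually_conj eventually_powr_le) auto
  then obtain N where "\<And>k'. N \<le> k' \<Longrightarrow> next_scale_ok j k k'" by (auto simp: eventually_sequentially)
  then show ?thesis by (intro exI[of _ "max N (Suc k)"]) auto
qed

primrec scale_exp :: "nat \<Rightarrow> nat" where
  "scale_exp 0 = 0"
| "scale_exp (Suc j) = (SOME k'. scale_exp j < k' \<and> next_scale_ok j (scale_exp j) k')"

lemma scale_exp_Suc: "scale_exp j < scale_exp (Suc j) \<and> next_scale_ok j (scale_exp j) (scale_exp (Suc j))"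
  using someI_ex[OF next_scale_ok_exists[of "scale_exp j" j]] by simp

lemma scale_exp_ge: "j \<le> scale_exp j"
  by (induction j) (use scale_exp_Suc in \<open>auto simp: Suc_le_eq intro: le_less_trans\<close>)

definition R :: "nat \<Rightarrow> real" where "R j = 2 ^ scale_exp j"
definition h1 :: "nat \<Rightarrow> real" where "h1 j = radius1 j (scale_exp j)"
definition h2 :: "nat \<Rightarrow> real" where "h2 j = radius2 j (scale_exp j)"
definition s1 :: "nat \<Rightarrow> real" where "s1 j = (if j = 0 then c0/2 else 2 * R j powr (1 - 2*a))"
definition s2 :: "nat \<Rightarrow> real" where "s2 j = (if j = 0 then c0/2 else R j powr (-a))"

lemma R_ge_1: "1 \<le> R j" by (simp add: R_def)
lemma R_pos: "0 < R j" by (simp add: R_def)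

lemma h1_Suc: "h1 (Suc j) = c * R (Suc j) powr (-1/2) / 2" by (simp add: h1_def radius1_def R_def)
lemma h2_Suc: "h2 (Suc j) = c * R (Suc j) powr (-1) / 2" by (simp add: h2_def radius2_def R_def)
lemma s1_Suc: "s1 (Suc j) = 2 * R (Suc j) powr (1 - 2*a)" by (simp add: s1_def)
lemma s2_Suc: "s2 (Suc j) = R (Suc j) powr (-a)" by (simp add: s2_def)
lemma h1_0: "h1 0 = c0/2" by (simp add: h1_def radius1_def)
lemma h2_0: "h2 0 = c0/2" by (simp add: h2_def radius2_def)

lemma next_scale:
  "c * R (Suc j) powr (-1/2) \<le> h1 j"
  "c * R (Suc j) powr (-1) \<le> h2 j"
  "4 * R (Suc j) powr (1 - 2*a) \<le> h1 j"
  "2 * R (Suc j) powr (-a) \<le> h2 j"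
  "(2 * R j) * R (Suc j) powr (1 - 2*a) \<le> 1"
  "1024 * 128 ^ m * R (Suc j) powr (s0 - \<alpha>) \<le> c ^ Suc m * (h1 j * h2 j ^ m)"
  "1024 * 128 ^ m * R (Suc j) powr (3/2 - 2*a - (1 + real m - s0) / 2) \<le> c ^ Suc m * (h1 j * h2 j ^ m)"
  "1024 * 128 ^ m * R (Suc j) powr (1 - 2*a) \<le> c ^ Suc m * (h1 j * h2 j ^ m)"
  using scale_exp_Suc[of j] unfolding next_scale_ok_def R_def h1_def h2_def by auto

lemma h1_pos: "0 < h1 j" using c_pos c0_pos by (simp add: h1_def radius1_def)
lemma h2_pos: "0 < h2 j" using c_pos c0_pos by (simp add: h2_def radius2_def)

lemma s2_le_s1: "1 \<le> j \<Longrightarrow> s2 j \<le> s1 j"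
proof -
  assume "1 \<le> j"
  then have "s2 j = R j powr (-a)" "s1 j = 2 * R j powr (1 - 2*a)" by (auto simp: s1_def s2_def)
  moreover have "R j powr (-a) \<le> R j powr (1 - 2*a)" using R_ge_1[of j] a_le by (intro powr_mono) auto
  ultimately show ?thesis using powr_ge_zero[of "R j" "1 - 2*a"] by linarith
qed

lemma nested_lattice_intervals_1: "nested_lattice_intervals s1 h1"
proof
  fix j
  show "0 < s1 j" using c0_pos R_pos[of j] by (simp add: s1_def)
  show "0 < h1 j" by (rule h1_pos)
  show "h1 (Suc j) \<le> h1 j / 2" using next_scale(1)[of j] by (simp add: h1_Suc)
  show "2 * s1 (Suc j) \<le> h1 j" using next_scale(3)[of j] by (simp add: s1_Suc)
next
  fix j :: nat assume "1 \<le> j"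
  then obtain i where i: "j = Suc i" by (cases j) auto
  have "R j powr (-1/2) \<le> R j powr (1 - 2*a)" using R_ge_1[of j] a_le by (intro powr_mono) auto
  moreover have "c * R j powr (-1/2) \<le> 1/2 * R j powr (-1/2)" using c_le by (intro mult_right_mono) auto
  moreover have "0 < R j powr (-1/2)" using R_pos[of j] by simp
  moreover have "2 * h1 j = c * R j powr (-1/2)" "s1 j = 2 * R j powr (1 - 2*a)"
    by (simp_all add: i h1_Suc s1_Suc)
  ultimately show "2 * h1 j < s1 j" by linarith
qed

lemma nested_lattice_intervals_2: "nested_lattice_intervals s2 h2"
proof
  fix j
  show "0 < s2 j" using c0_pos R_pos[of j] by (simp add: s2_def)
  show "0 < h2 j" by (rule h2_pos)
  show "h2 (Suc j) \<le> h2 j / 2" using next_scale(2)[of j] by (simp add: h2_Suc)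
  show "2 * s2 (Suc j) \<le> h2 j" using next_scale(4)[of j] by (simp add: s2_Suc)
next
  fix j :: nat assume "1 \<le> j"
  then obtain i where i: "j = Suc i" by (cases j) auto
  have "R j powr (-1) \<le> R j powr (-a)" using R_ge_1[of j] a_le by (intro powr_mono) auto
  moreover have "c * R j powr (-1) \<le> 1/2 * R j powr (-1)" using c_le by (intro mult_right_mono) auto
  moreover have "0 < R j powr (-1)" using R_pos[of j] by simp
  moreover have "2 * h2 j = c * R j powr (-1)" "s2 j = R j powr (-a)"
    by (simp_all add: i h2_Suc s2_Suc)
  ultimately show "2 * h2 j < s2 j" by linarith
qed

sublocale T1: nested_lattice_intervals s1 h1 by (rule nested_lattice_intervals_1)
sublocale T2: nested_lattice_intervals s2 h2 by (rule nested_lattice_intervals_2)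

lemma num_addresses_Suc_ge:
  "h1 j / (8 * R (Suc j) powr (1 - 2*a)) \<le> real (T1.num_addresses (Suc j))"
  "h2 j / (4 * R (Suc j) powr (-a)) \<le> real (T2.num_addresses (Suc j))"
proof -
  have "h1 j / (4 * s1 (Suc j)) * 1 \<le> h1 j / (4 * s1 (Suc j)) * real (T1.num_addresses j)"
    using h1_pos[of j] T1.spacing_pos[of "Suc j"] T1.num_addresses_pos[of j] by (intro mult_left_mono) auto
  then show "h1 j / (8 * R (Suc j) powr (1 - 2*a)) \<le> real (T1.num_addresses (Suc j))"
    using T1.num_addresses_Suc_lower[of j] by (simp add: s1_Suc)
  have "h2 j / (4 * s2 (Suc j)) * 1 \<le> h2 j / (4 * s2 (Suc j)) * real (T2.num_addresses j)"
    using h2_pos[of j] T2.spacing_pos[of "Suc j"] T2.num_addresses_pos[of j] by (intro mult_left_mono) auto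
  then show "h2 j / (4 * R (Suc j) powr (-a)) \<le> real (T2.num_addresses (Suc j))"
    using T2.num_addresses_Suc_lower[of j] by (simp add: s2_Suc)
qed

lemma refinement_step_at:
  "refinement_step (R (Suc j)) c (h1 j) (h2 j) (real (T1.num_addresses (Suc j)))
     (real (T2.num_addresses (Suc j))) a"
  using R_ge_1 c_pos c_le h1_pos h2_pos num_addresses_Suc_ge by unfold_locales auto

text \<open>A level-\<open>J\<close> cell inside a set of diameter \<open>d\<close> containing \<open>y\<close> has each coordinate interval in the
  window of radius \<open>d\<close> around the coordinate of \<open>y\<close>. Hence this property bounds the proportion of such
  cells by \<open>(32 / c0) ^ (m + 1) * d powr s0\<close>, the estimate the mass distribution principle needs.\<close>

definition fractions_bounded :: "real \<Rightarrow> bool" where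
  "fractions_bounded d \<longleftrightarrow> (\<exists>\<beta>1 \<beta>2. 0 \<le> \<beta>1 \<and> 0 \<le> \<beta>2 \<and> \<beta>1 * \<beta>2 ^ m \<le> (32 / c0) ^ Suc m * d powr s0 \<and>
     (\<forall>J y. T1.inside_fraction J y d \<le> \<beta>1) \<and> (\<forall>J y. T2.inside_fraction J y d \<le> \<beta>2))"

lemma fractions_boundedI:
  assumes "\<beta>1 * \<beta>2 ^ m \<le> d powr s0"
    and "\<And>J y. T1.inside_fraction J y d \<le> \<beta>1" "\<And>J y. T2.inside_fraction J y d \<le> \<beta>2"
  shows "fractions_bounded d"
  unfolding fractions_bounded_def
proof (intro exI conjI allI)
  show "0 \<le> \<beta>1" using assms(2)[of 0 0] T1.inside_fraction_nonneg[of 0 0 d] by linarith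
  show "0 \<le> \<beta>2" using assms(3)[of 0 0] T2.inside_fraction_nonneg[of 0 0 d] by linarith
  have "1 \<le> (32 / c0) ^ Suc m" using c0_pos c0_le_1 by (intro one_le_power) (simp add: field_simps)
  then have "d powr s0 \<le> (32 / c0) ^ Suc m * d powr s0"
    using mult_right_mono[of 1 "(32 / c0) ^ Suc m" "d powr s0"] by simp
  then show "\<beta>1 * \<beta>2 ^ m \<le> (32 / c0) ^ Suc m * d powr s0" using assms(1) by linarith
qed (use assms in auto)

lemma fractions_bounded_top:
  assumes "s1 1 \<le> d" "d \<le> 1"
  shows "fractions_bounded d"
  unfolding fractions_bounded_def
proof (intro exI[of _ "32 * d / c0"] conjI allI)
  have d: "0 < d" using assms(1) T1.spacing_pos[of 1] by linarith
  show "T1.inside_fraction J y d \<le> 32 * d / c0" for J y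
    using T1.inside_fraction_le_coarse[of 0 d J y] assms(1) by (simp add: h1_0)
  show "T2.inside_fraction J y d \<le> 32 * d / c0" for J y
    using T2.inside_fraction_le_coarse[of 0 d J y] assms(1) s2_le_s1[of 1] by (simp add: h2_0)
  show "0 \<le> 32 * d / c0" "0 \<le> 32 * d / c0" using d c0_pos by simp_all
  have "d ^ Suc m \<le> d powr s0"
    using d assms(2) s0_le powr_mono'[of s0 "1 + real m" d] by (simp only: power_Suc_eq_powr[OF d])
  then have "(32 / c0) ^ Suc m * d ^ Suc m \<le> (32 / c0) ^ Suc m * d powr s0"
    using c0_pos by (intro mult_left_mono) auto
  then show "32 * d / c0 * (32 * d / c0) ^ m \<le> (32 / c0) ^ Suc m * d powr s0"
    by (simp add: power_mult_distrib power_divide field_simps)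
qed

lemma fractions_bounded_level:
  assumes "s1 (Suc (Suc j)) \<le> d" "d \<le> s1 (Suc j)" "d \<le> 1"
  shows "fractions_bounded d"
proof -
  define Rr where "Rr = R (Suc j)"
  define P1 where "P1 = real (T1.num_addresses (Suc j))"
  define P2 where "P2 = real (T2.num_addresses (Suc j))"
  interpret step: refinement_step Rr c "h1 j" "h2 j" P1 P2 a s0 m
    unfolding Rr_def P1_def P2_def by (rule refinement_step_at)
  have \<alpha>: "step.\<alpha> = \<alpha>" by (simp add: step.\<alpha>_def \<alpha>_def)
  have d: "0 < d" using assms(1) T1.spacing_pos[of "Suc (Suc j)"] by linarith
  have s2: "s2 (Suc (Suc j)) \<le> d" using s2_le_s1[of "Suc (Suc j)"] assms(1) by simp
  note conds = next_scale(6-8)[of j, folded Rr_def]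
  have coarse1: "T1.inside_fraction J y d \<le> 16 * d / (c * Rr powr (-1/2) / 2 * P1)" for J y
    using T1.inside_fraction_le_coarse[OF assms(1)] by (simp add: h1_Suc Rr_def P1_def)
  have intermediate1: "T1.inside_fraction J y d \<le> 64 * d / (c * Rr powr (-1/2) / 2 * P1)" for J y
    using T1.inside_fraction_le_intermediate[of "Suc j"] assms by (simp add: h1_Suc Rr_def P1_def)
  have small1: "T1.inside_fraction J y d \<le> 4 / P1" for J y
    using T1.inside_fraction_le_small[of "Suc j"] assms d by (simp add: P1_def)
  have coarse2: "T2.inside_fraction J y d \<le> 16 * d / (c * Rr powr (-1) / 2 * P2)" for J y
    using T2.inside_fraction_le_coarse[OF s2] by (simp add: h2_Suc Rr_def P2_def)
  have small2: "T2.inside_fraction J y d \<le> 4 / P2" if "d \<le> Rr powr (-a)" for J y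
    using T2.inside_fraction_le_small[of "Suc j"] that d by (simp add: s2_Suc Rr_def P2_def)
  have large2: "T2.inside_fraction J y d \<le> 4 * d / (Rr powr (-a) * P2)" if "Rr powr (-a) \<le> d" for J y
    using T2.inside_fraction_le_large[of "Suc j"] that by (simp add: s2_Suc Rr_def P2_def)
  consider "d \<le> Rr powr (-1)" | "Rr powr (-1) \<le> d" "d \<le> Rr powr (-a)"
    | "Rr powr (-a) \<le> d" "d \<le> Rr powr (-1/2)" | "Rr powr (-1/2) \<le> d"
    by linarith
  then show ?thesis
  proof cases
    case 1
    then have "16 * d / (c * Rr powr (-1/2) / 2 * P1) * (16 * d / (c * Rr powr (-1) / 2 * P2)) ^ m
        \<le> d powr s0"
      using d s0_le conds(1) by (intro step.product_bound_le_R_inv) (auto simp: \<alpha>)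
    then show ?thesis using coarse1 coarse2 by (rule fractions_boundedI)
  next
    case 2
    then have "64 * d / (c * Rr powr (-1/2) / 2 * P1) * (4 / P2) ^ m \<le> d powr s0"
      using s0_ge_1 conds(1) by (intro step.product_bound_ge_R_inv) (auto simp: \<alpha>)
    then show ?thesis using intermediate1 small2[OF 2(2)] by (rule fractions_boundedI)
  next
    case 3
    then have "64 * d / (c * Rr powr (-1/2) / 2 * P1) * (4 * d / (Rr powr (-a) * P2)) ^ m \<le> d powr s0"
      using d s0_le conds(2) by (intro step.product_bound_le_R_sqrt_inv) auto
    then show ?thesis using intermediate1 large2[OF 3(1)] by (rule fractions_boundedI)
  next
    case 4
    have "Rr powr (-a) \<le> Rr powr (-1/2)"
      using R_ge_1[of "Suc j"] a_gt by (intro powr_mono) (auto simp: Rr_def)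
    then have "Rr powr (-a) \<le> d" using 4 by linarith
    have "4 / P1 * (4 * d / (Rr powr (-a) * P2)) ^ m \<le> d powr s0"
      using 4 assms(3) conds(2,3) by (intro step.product_bound_ge_R_sqrt_inv) auto
    then show ?thesis using small1 large2[OF \<open>Rr powr (-a) \<le> d\<close>] by (rule fractions_boundedI)
  qed
qed

lemma fractions_bounded_of_pos:
  assumes "0 < d" "d \<le> 1"
  shows "fractions_bounded d"
proof -
  have "\<exists>L. s1 (Suc L) \<le> d"
  proof -
    obtain L where L: "c0 / d < 2 ^ L" using real_arch_pow[of 2 "c0 / d"] by auto
    have "s1 (Suc L) \<le> h1 L / 2" using T1.spacing_le_radius[of L] by simp
    also have "\<dots> \<le> c0 / 2 ^ L" using T1.radius_le[of L] c0_pos by (simp add: h1_0 field_simps)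
    also have "\<dots> \<le> d" using L assms(1) by (simp add: field_simps)
    finally show ?thesis by blast
  qed
  define L where "L = (LEAST L. s1 (Suc L) \<le> d)"
  have L: "s1 (Suc L) \<le> d" unfolding L_def by (rule LeastI_ex) fact
  show ?thesis
  proof (cases L)
    case 0
    then show ?thesis using L assms(2) by (intro fractions_bounded_top) auto
  next
    case (Suc j)
    then have "\<not> s1 (Suc j) \<le> d" using not_less_Least[of j "\<lambda>L. s1 (Suc L) \<le> d"] by (simp add: L_def)
    then show ?thesis using L Suc assms(2) by (intro fractions_bounded_level) auto
  qed
qed

end

lemma (in nested_lattice_intervals) inside_fraction_0: "inside_fraction J y 0 = 0"
proof -
  have "\<not> interval_of xs \<subseteq> {y - 0 .. y + 0}" for xs
  proof
    assume "interval_of xs \<subseteq> {y - 0 .. y + 0}"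
    moreover have "center_of xs - h (length xs) \<in> interval_of xs"
      "center_of xs + h (length xs) \<in> interval_of xs"
      using radius_pos[of "length xs"] by (auto simp: interval_of_def)
    ultimately show False using radius_pos[of "length xs"] by (simp add: subset_singleton_iff) fastforce
  qed
  then show ?thesis by (simp add: inside_fraction_def inside_addrs_def)
qed

context divergence_construction
begin

lemma fractions_bounded_of_le_1:
  assumes "0 \<le> d" "d \<le> 1"
  shows "fractions_bounded d"
proof (cases "d = 0")
  case True
  have "0 * 0 ^ m \<le> (0::real) powr s0" by simp
  then show ?thesis unfolding True
    by (rule fractions_boundedI) (simp_all add: T1.inside_fraction_0 T2.inside_fraction_0)
qed (use assms fractions_bounded_of_pos in auto)

definition coord_spacing :: "'n \<Rightarrow> nat \<Rightarrow> real" where "coord_spacing i = (if i = i1 then s1 else s2)"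
definition coord_radius :: "'n \<Rightarrow> nat \<Rightarrow> real" where "coord_radius i = (if i = i1 then h1 else h2)"

lemma nested_lattice_intervals_coord: "nested_lattice_intervals (coord_spacing i) (coord_radius i)"
  using nested_lattice_intervals_1 nested_lattice_intervals_2
  by (simp add: coord_spacing_def coord_radius_def)

abbreviation "addresses_at i \<equiv> nested_lattice_intervals.addresses (coord_spacing i) (coord_radius i)"
abbreviation "center_at i \<equiv> nested_lattice_intervals.center_of (coord_spacing i) (coord_radius i)"
abbreviation "interval_at i \<equiv> nested_lattice_intervals.interval_of (coord_spacing i) (coord_radius i)"
abbreviation "inside_at i \<equiv> nested_lattice_intervals.inside_addrs (coord_spacing i) (coord_radius i)"
abbreviation "fraction_at i \<equiv> nested_lattice_intervals.inside_fraction (coord_spacing i) (coord_radius i)"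
abbreviation "num_addresses_at i \<equiv>
  nested_lattice_intervals.num_addresses (coord_spacing i) (coord_radius i)"

definition addrs :: "nat \<Rightarrow> ('n \<Rightarrow> nat list) set" where
  "addrs J = (\<Pi>\<^sub>E i\<in>UNIV. addresses_at i J)"

definition cell :: "nat \<Rightarrow> ('n \<Rightarrow> nat list) \<Rightarrow> (real ^ 'n) set" where
  "cell J E = {x. \<forall>i. x $ i \<in> interval_at i (E i)}"

lemma interval_at_eq:
  "interval_at i xs
     = {center_at i xs - coord_radius i (length xs) .. center_at i xs + coord_radius i (length xs)}"
  by (simp add: nested_lattice_intervals.interval_of_def[OF nested_lattice_intervals_coord])

lemma coord_radius_pos: "0 < coord_radius i n"
  using nested_lattice_intervals.radius_pos[OF nested_lattice_intervals_coord] .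

lemma length_addrs: "E \<in> addrs J \<Longrightarrow> length (E i) = J"
  using nested_lattice_intervals.length_addresses[OF nested_lattice_intervals_coord]
  by (auto simp: addrs_def)

lemma finite_addrs: "finite (addrs J)"
  unfolding addrs_def
  by (intro finite_PiE)
    (auto intro: nested_lattice_intervals.finite_addresses[OF nested_lattice_intervals_coord])

lemma card_addrs: "card (addrs J) = (\<Prod>i\<in>UNIV. num_addresses_at i J)"
  by (simp add: addrs_def card_PiE
      nested_lattice_intervals.card_addresses[OF nested_lattice_intervals_coord])

lemma addrs_nonempty: "addrs J \<noteq> {}"
proof -
  have "0 < card (addrs J)" unfolding card_addrs
    using nested_lattice_intervals.num_addresses_pos[OF nested_lattice_intervals_coord]
    by (simp add: prod_pos)
  then show ?thesis by auto
qed

lemma cell_eq_cbox: "cell J E = cbox (\<chi> i. center_at i (E i) - coord_radius i (length (E i)))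
                                   (\<chi> i. center_at i (E i) + coord_radius i (length (E i)))"
  by (auto simp: cell_def mem_box_cart interval_at_eq)

lemma center_in_cell: "(\<chi> i. center_at i (E i)) \<in> cell J E"
  using coord_radius_pos less_imp_le by (auto simp: cell_def interval_at_eq)

lemma compact_cell: "compact (cell J E)"
  unfolding cell_eq_cbox by simp

lemma cantor_levels_decseq: "decseq (\<lambda>J. \<Union>E\<in>addrs J. cell J E)"
proof (rule decseq_SucI, rule subsetI)
  fix J x assume "x \<in> (\<Union>E\<in>addrs (Suc J). cell (Suc J) E)"
  then obtain E where E: "E \<in> addrs (Suc J)" "x \<in> cell (Suc J) E" by auto
  have Ei: "E i \<in> addresses_at i (Suc J)" for i using E(1) by (auto simp: addrs_def)
  have "tl (E i) \<in> addresses_at i J \<and> x $ i \<in> interval_at i (tl (E i))" for i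
  proof -
    interpret T: nested_lattice_intervals "coord_spacing i" "coord_radius i"
      by (rule nested_lattice_intervals_coord)
    obtain u xs where u: "E i = u # xs" "u < T.num_children J" "xs \<in> T.addresses J"
      using Ei[of i] by auto
    then have "T.interval_of (E i) \<subseteq> T.interval_of xs"
      using T.interval_child_subset T.length_addresses by simp
    moreover have "x $ i \<in> T.interval_of (E i)" using E(2) by (simp add: cell_def)
    ultimately show ?thesis using u by auto
  qed
  then have "(\<lambda>i. tl (E i)) \<in> addrs J" "x \<in> cell J (\<lambda>i. tl (E i))"
    by (auto simp: addrs_def cell_def)
  then show "x \<in> (\<Union>E\<in>addrs J. cell J E)" by blast
qed

lemma diameter_cell_le: "E \<in> addrs J \<Longrightarrow> diameter (cell J E) \<le> real CARD('n) * c0 / 2 ^ J"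
proof -
  assume E: "E \<in> addrs J"
  have "coord_radius i J \<le> (c0 / 2) / 2 ^ J" for i
    using nested_lattice_intervals.radius_le[OF nested_lattice_intervals_coord, of i J]
    by (cases "i = i1") (simp_all add: coord_radius_def h1_0 h2_0)
  then have "norm (x - y) \<le> real CARD('n) * c0 / 2 ^ J" if "x \<in> cell J E" "y \<in> cell J E" for x y
  proof -
    have "\<bar>(x - y) $ i\<bar> \<le> c0 / 2 ^ J" for i
    proof -
      have "x $ i \<in> interval_at i (E i)" "y $ i \<in> interval_at i (E i)" using that by (auto simp: cell_def)
      then have "\<bar>(x - y) $ i\<bar> \<le> 2 * coord_radius i J"
        using length_addrs[OF E, of i] by (auto simp: interval_at_eq abs_le_iff)
      then show ?thesis using \<open>coord_radius i J \<le> (c0 / 2) / 2 ^ J\<close> by simp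
    qed
    then have "(\<Sum>i\<in>UNIV. \<bar>(x - y) $ i\<bar>) \<le> (\<Sum>i\<in>(UNIV::'n set). c0 / 2 ^ J)" by (rule sum_mono)
    then show ?thesis using norm_le_l1_cart[of "x - y"] by simp
  qed
  then show ?thesis using c0_pos by (intro diameter_le) auto
qed

lemma eventually_cells_small:
  assumes "0 < \<epsilon>"
  shows "\<forall>\<^sub>F J in sequentially. \<forall>E\<in>addrs J. diameter (cell J E) < \<epsilon>"
proof -
  obtain J0 where J0: "real CARD('n) * c0 / \<epsilon> < 2 ^ J0"
    using real_arch_pow[of 2 "real CARD('n) * c0 / \<epsilon>"] by auto
  have "real CARD('n) * c0 / 2 ^ J < \<epsilon>" if "J0 \<le> J" for J
  proof -
    have "real CARD('n) * c0 / 2 ^ J \<le> real CARD('n) * c0 / 2 ^ J0"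
      using that c0_pos by (intro divide_left_mono) (auto intro: power_increasing)
    also have "\<dots> < \<epsilon>" using J0 assms by (simp add: field_simps)
    finally show ?thesis .
  qed
  then show ?thesis
    using diameter_cell_le by (intro eventually_sequentiallyI[of J0]) (meson le_less_trans)
qed

lemma cells_inside_subset:
  assumes "bounded V" "y \<in> V"
  shows "{E \<in> addrs J. cell J E \<subseteq> V} \<subseteq> (\<Pi>\<^sub>E i\<in>UNIV. inside_at i J (y $ i) (diameter V))"
proof
  fix E assume "E \<in> {E \<in> addrs J. cell J E \<subseteq> V}"
  then have E: "E \<in> addrs J" "cell J E \<subseteq> V" by auto
  have "interval_at i (E i) \<subseteq> {y $ i - diameter V .. y $ i + diameter V}" for i
  proof
    fix t assume t: "t \<in> interval_at i (E i)"
    define z where "z = (\<chi> k. if k = i then t else center_at k (E k))"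
    have "z \<in> cell J E" using t center_in_cell[where J=J and E=E] by (auto simp: z_def cell_def)
    then have "z \<in> V" using E by auto
    have "\<bar>t - y $ i\<bar> = \<bar>(z - y) $ i\<bar>" by (simp add: z_def)
    also have "\<dots> \<le> dist z y" unfolding dist_norm by (rule component_le_norm_cart)
    also have "\<dots> \<le> diameter V" by (rule diameter_bounded_bound[OF assms(1) \<open>z \<in> V\<close> assms(2)])
    finally show "t \<in> {y $ i - diameter V .. y $ i + diameter V}" by (simp add: abs_le_iff)
  qed
  then show "E \<in> (\<Pi>\<^sub>E i\<in>UNIV. inside_at i J (y $ i) (diameter V))"
    using E(1)
    by (auto simp: addrs_def nested_lattice_intervals.inside_addrs_def[OF nested_lattice_intervals_coord])
qed

lemma card_other_coords: "card (UNIV - {i1}) = m"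
  using m_def by (simp add: card_Diff_singleton)

lemma prod_fractions_le:
  assumes "fractions_bounded d"
  shows "(\<Prod>i\<in>UNIV. fraction_at i J (y $ i) d) \<le> (32 / c0) ^ Suc m * d powr s0"
proof -
  obtain \<beta>1 \<beta>2 where \<beta>: "0 \<le> \<beta>1" "\<beta>1 * \<beta>2 ^ m \<le> (32 / c0) ^ Suc m * d powr s0"
    "\<And>J y. T1.inside_fraction J y d \<le> \<beta>1" "\<And>J y. T2.inside_fraction J y d \<le> \<beta>2"
    using assms unfolding fractions_bounded_def by blast
  have "(\<Prod>i\<in>UNIV. fraction_at i J (y $ i) d)
      = fraction_at i1 J (y $ i1) d * (\<Prod>i\<in>UNIV - {i1}. fraction_at i J (y $ i) d)"
    by (simp add: prod.remove)
  also have "\<dots> = T1.inside_fraction J (y $ i1) d * (\<Prod>i\<in>UNIV - {i1}. T2.inside_fraction J (y $ i) d)"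
    by (simp add: coord_spacing_def coord_radius_def)
  also have "\<dots> \<le> \<beta>1 * \<beta>2 ^ m"
  proof (rule mult_mono)
    have "(\<Prod>i\<in>UNIV - {i1}. T2.inside_fraction J (y $ i) d) \<le> (\<Prod>i\<in>UNIV - {i1}. \<beta>2)"
      using \<beta>(4) T2.inside_fraction_nonneg by (intro prod_mono) auto
    then show "(\<Prod>i\<in>UNIV - {i1}. T2.inside_fraction J (y $ i) d) \<le> \<beta>2 ^ m"
      by (simp add: card_other_coords)
  qed (use \<beta> T2.inside_fraction_nonneg in \<open>auto intro: prod_nonneg\<close>)
  also have "\<dots> \<le> (32 / c0) ^ Suc m * d powr s0" by (rule \<beta>(2))
  finally show ?thesis .
qed

lemma card_cells_inside:
  assumes "bounded V" "diameter V \<le> 1"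
  shows "real (card {E \<in> addrs J. cell J E \<subseteq> V})
           \<le> (32 / c0) ^ Suc m * diameter V powr s0 * real (card (addrs J))"
proof (cases "V = {}")
  case True
  then have none: "{E \<in> addrs J. cell J E \<subseteq> V} = {}" using center_in_cell by blast
  show ?thesis unfolding none using c0_pos by simp
next
  case False
  then obtain y where y: "y \<in> V" by auto
  let ?d = "diameter V"
  have "card {E \<in> addrs J. cell J E \<subseteq> V} \<le> card (\<Pi>\<^sub>E i\<in>UNIV. inside_at i J (y $ i) ?d)"
    using cells_inside_subset[OF assms(1) y]
    by (intro card_mono finite_PiE)
      (auto intro: nested_lattice_intervals.finite_inside_addrs[OF nested_lattice_intervals_coord])
  then have "real (card {E \<in> addrs J. cell J E \<subseteq> V}) \<le> (\<Prod>i\<in>UNIV. real (card (inside_at i J (y $ i) ?d)))"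
    by (simp add: card_PiE flip: of_nat_prod)
  also have "\<dots> = (\<Prod>i\<in>UNIV. fraction_at i J (y $ i) ?d) * real (card (addrs J))"
    using nested_lattice_intervals.num_addresses_pos[OF nested_lattice_intervals_coord]
    by (simp add: card_addrs prod.distrib[symmetric]
        nested_lattice_intervals.inside_fraction_def[OF nested_lattice_intervals_coord])
  also have "\<dots> \<le> (32 / c0) ^ Suc m * ?d powr s0 * real (card (addrs J))"
    using prod_fractions_le[OF fractions_bounded_of_le_1[OF diameter_ge_0[OF assms(1)] assms(2)]]
    by (rule mult_right_mono) simp
  finally show ?thesis .
qed

lemma cantor_level_0_subset_cube: "(\<Union>E\<in>addrs 0. cell 0 E) \<subseteq> {x. \<forall>i. 0 \<le> x $ i \<and> x $ i \<le> c0}"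
proof (intro subsetI CollectI allI)
  fix x i assume "x \<in> (\<Union>E\<in>addrs 0. cell 0 E)"
  then obtain E where "E \<in> addrs 0" "x \<in> cell 0 E" by auto
  then have "x $ i \<in> interval_at i []"
    by (auto simp: cell_def addrs_def
        nested_lattice_intervals.addresses.simps[OF nested_lattice_intervals_coord])
  moreover have "coord_spacing i 0 = c0/2" "coord_radius i 0 = c0/2"
    by (simp_all add: coord_spacing_def coord_radius_def s1_def s2_def h1_0 h2_0)
  ultimately show "0 \<le> x $ i \<and> x $ i \<le> c0"
    by (simp add: interval_at_eq nested_lattice_intervals.center_of_def[OF nested_lattice_intervals_coord]
        nested_lattice_intervals.lattice_index.simps[OF nested_lattice_intervals_coord])
qed

lemma D_k_eq: "D_k CARD('n) a (2*a - 1) k = R_k k powr a"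
proof -
  have "real CARD('n) - (real CARD('n) - 1) * a + real CARD('n) * (2*a - 1) = a * (real CARD('n) + 1)"
    by (simp add: algebra_simps)
  then show ?thesis by (simp add: D_k_def add_pos_nonneg)
qed

text \<open>Since \<open>b = 2 a - 1\<close>, only \<open>q = 1\<close> occurs, and the slab centres of level \<open>k\<close> form the lattice
  with spacing \<open>2 R_k ^ (1 - 2 a)\<close> in the first direction and \<open>R_k ^ -a\<close> in the others: exactly the
  centres \<open>s1\<close>, \<open>s2\<close> of the intervals of the construction.\<close>

lemma slab_center_eq:
  "slab_center i1 a (2*a - 1) (scale_exp J) p 1 $ i = of_int (p i) * coord_spacing i J" if "1 \<le> J"
proof -
  have Rk: "R_k (scale_exp J) = R J" by (simp add: R_k_def R_def)
  have RJ: "0 < R J" by (rule R_pos)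
  show ?thesis
  proof (cases "i = i1")
    case True
    have "R J / (R J powr a)\<^sup>2 = R J powr (1 - 2 * a)"
      using RJ by (simp add: powr_power powr_diff)
    then have "2 * x * R J / (R J powr a)\<^sup>2 = x * (2 * R J powr (1 - 2 * a))" for x
      by (metis times_divide_eq_right mult.assoc mult.commute)
    then show ?thesis using True that
      by (simp add: slab_center_def D_k_eq Rk coord_spacing_def s1_def)
  next
    case False
    then show ?thesis using that
      by (simp add: slab_center_def D_k_eq Rk coord_spacing_def s2_def powr_minus divide_inverse)
  qed
qed

lemma cantor_level_subset_F_k:
  "(\<Union>E\<in>addrs (Suc j). cell (Suc j) E) \<subseteq> F_k i1 a (2*a - 1) c (scale_exp (Suc j))"
proof
  fix x assume "x \<in> (\<Union>E\<in>addrs (Suc j). cell (Suc j) E)"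
  then obtain E where E: "E \<in> addrs (Suc j)" "x \<in> cell (Suc j) E" by auto
  define p where "p i = nested_lattice_intervals.lattice_index (coord_spacing i) (coord_radius i) (E i)"
    for i
  have "x \<in> slab i1 a (2*a - 1) c (scale_exp (Suc j)) p 1"
    unfolding slab_def
  proof (intro CollectI allI)
    fix i
    have Rk: "R_k (scale_exp (Suc j)) = R (Suc j)" unfolding R_k_def R_def ..
    have "x $ i \<in> interval_at i (E i)" using E(2) by (simp add: cell_def)
    then have "\<bar>x $ i - center_at i (E i)\<bar> \<le> coord_radius i (Suc j)"
      using length_addrs[OF E(1), of i] by (auto simp: interval_at_eq abs_le_iff)
    moreover have "center_at i (E i) = slab_center i1 a (2*a - 1) (scale_exp (Suc j)) p 1 $ i"
      using length_addrs[OF E(1), of i] slab_center_eq[of "Suc j" p i]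
      by (simp add: nested_lattice_intervals.center_of_def[OF nested_lattice_intervals_coord] p_def)
    moreover have "coord_radius i (Suc j) = (if i = i1 then c * R_k (scale_exp (Suc j)) powr (-1/2)
        else c * R_k (scale_exp (Suc j)) powr (-1)) / 2"
      unfolding Rk by (simp add: coord_radius_def h1_Suc h2_Suc)
    ultimately show "\<bar>x $ i - slab_center i1 a (2*a - 1) (scale_exp (Suc j)) p 1 $ i\<bar>
        \<le> (if i = i1 then c * R_k (scale_exp (Suc j)) powr (-1/2)
            else c * R_k (scale_exp (Suc j)) powr (-1)) / 2"
      by simp
  qed
  moreover have "admissible i1 p 1" by (simp add: admissible_def)
  moreover have "real_of_int 1 \<le> Q_k CARD('n) a (2*a - 1) (scale_exp (Suc j))"
    by (simp add: Q_k_def R_k_def)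
  ultimately show "x \<in> F_k i1 a (2*a - 1) c (scale_exp (Suc j))"
    unfolding F_k_def by blast
qed

lemma cantor_set_subset:
  "(\<Inter>J. \<Union>E\<in>addrs J. cell J E)
     \<subseteq> divergence_set i1 a (2*a - 1) c \<inter> {x. \<forall>i. 0 \<le> x $ i \<and> x $ i \<le> c0}"
proof
  fix x assume x: "x \<in> (\<Inter>J. \<Union>E\<in>addrs J. cell J E)"
  have "x \<in> (\<Union>k\<in>{N..}. F_k i1 a (2*a - 1) c k)" for N
    using x cantor_level_subset_F_k[of N] scale_exp_ge[of "Suc N"] by force
  then show "x \<in> divergence_set i1 a (2*a - 1) c \<inter> {x. \<forall>i. 0 \<le> x $ i \<and> x $ i \<le> c0}"
    using x cantor_level_0_subset_cube by (auto simp: divergence_set_def)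
qed

lemma cantor_scheme: "cantor_scheme addrs cell"
proof
  show "cell J E \<noteq> {}" for J E using center_in_cell by blast
  show "\<forall>\<^sub>F J in sequentially. \<forall>E\<in>addrs J. diameter (cell J E) < \<epsilon>" if "0 < \<epsilon>" for \<epsilon>
    using that by (rule eventually_cells_small)
  show "compact (cell J E)" for J E by (rule compact_cell)
qed (fact finite_addrs addrs_nonempty cantor_levels_decseq)+

lemma hausdorff_measure_ne_0:
  "hausdorff_measure s0 (divergence_set i1 a (2*a - 1) c \<inter> {x. \<forall>i. 0 \<le> x $ i \<and> x $ i \<le> c0}) \<noteq> 0"
proof (rule mass_distribution_principle[OF cantor_scheme card_cells_inside])
  show "(\<Inter>J. cantor_scheme.level addrs cell J)
      \<subseteq> divergence_set i1 a (2*a - 1) c \<inter> {x. \<forall>i. 0 \<le> x $ i \<and> x $ i \<le> c0}"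
    using cantor_set_subset by (simp add: cantor_scheme.level_def[OF cantor_scheme])
  show "0 < s0" using s0_ge_1 by simp
  show "0 < (32 / c0) ^ Suc m" using c0_pos by simp
qed

end

lemma divergence_set_hausdorff_measure_ne_0:
  fixes i1 :: "'n::finite"
  assumes "2 \<le> CARD('n)" "1/2 < a" "a \<le> 3/4" "0 < c" "c \<le> 1/2" "0 < c0" "c0 \<le> 1"
    and "1 \<le> s" "s < 1/2 + (real CARD('n) - 1) * a + (2*a - 1)"
  shows "hausdorff_measure s (divergence_set i1 a (2*a - 1) c \<inter> {x. \<forall>i. 0 \<le> x $ i \<and> x $ i \<le> c0}) \<noteq> 0"
proof -
  interpret divergence_construction i1 a c c0 s "CARD('n) - 1"
    using assms by unfold_locales (auto simp: of_nat_diff)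
  show ?thesis by (rule hausdorff_measure_ne_0)
qed

theorem theorem5p3:
  fixes i1 :: "'n::finite" and a b c0 :: real
  assumes "CARD('n) \<ge> 2"
    and "1/2 < a" and "a \<le> 3/4" and "b = 2 * a - 1"
    and "0 < c0" and "c0 \<le> 1"
  shows "\<exists>cstar>0. \<forall>c. 0 < c \<and> c \<le> cstar \<longrightarrow>
           hausdorff_dim (divergence_set i1 a b c \<inter> {x :: real ^ 'n. \<forall>i. 0 \<le> x $ i \<and> x $ i \<le> c0})
             \<ge> 1/2 + (real CARD('n) - 1) * a + b"
proof (intro exI[of _ "1/2"] conjI allI impI)
  fix c :: real assume c: "0 < c \<and> c \<le> 1/2"
  let ?E = "divergence_set i1 a b c \<inter> {x :: real ^ 'n. \<forall>i. 0 \<le> x $ i \<and> x $ i \<le> c0}"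
  define \<alpha> where "\<alpha> = 1/2 + (real CARD('n) - 1) * a + b"
  have "1 * a \<le> (real CARD('n) - 1) * a" using assms(1,2) by (intro mult_right_mono) auto
  then have "1 < \<alpha>" unfolding \<alpha>_def using assms(2,4) by linarith
  have "\<alpha> \<le> hausdorff_dim ?E"
  proof (rule hausdorff_dim_geI)
    show "hausdorff_measure (real CARD('n) + 1) ?E = 0"
      using assms(6) by (intro hausdorff_measure_unit_cube) (auto intro: order_trans)
    fix s assume "0 \<le> s" "s < \<alpha>"
    \<comment> \<open>the construction needs \<open>s0 \<ge> 1\<close>; smaller exponents follow by monotonicity in the exponent\<close>
    define s0 where "s0 = max s ((1 + \<alpha>) / 2)"
    have "1 \<le> s0" "s0 < \<alpha>" "s \<le> s0"
      using \<open>1 < \<alpha>\<close> \<open>s < \<alpha>\<close> unfolding s0_def by (simp_all add: le_max_iff_disj)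
    have "s0 < 1/2 + (real CARD('n) - 1) * a + (2*a - 1)"
      using \<open>s0 < \<alpha>\<close> assms(4) by (simp add: \<alpha>_def)
    then have "hausdorff_measure s0 ?E \<noteq> 0"
      using divergence_set_hausdorff_measure_ne_0 assms(1-3,5,6) c \<open>1 \<le> s0\<close> assms(4) by blast
    then show "hausdorff_measure s ?E \<noteq> 0"
      using hausdorff_measure_antimono_exponent[OF \<open>s \<le> s0\<close>, of ?E] by auto
  qed simp
  then show "hausdorff_dim ?E \<ge> 1/2 + (real CARD('n) - 1) * a + b" by (simp add: \<alpha>_def)
qed simp

end
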